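(* Under the setup below, assume that $P$ is a simplex with vertices $v_0,\dots,v_d$, and let $$\mathrm{BOX}(P)=\Big\{v\in M': v=\sum_{i=0}^d a_iv_i \text{ for some } 0\le a_i<1\Big\}.$$ Let $u:M'\to\mathbb{Z}$ be the projection to the second factor. Then for each $i$, $\phi_i$ is the permutation character of $G$ acting on $\{v\in\mathrm{BOX}(P): u(v)=i\}$. In particular, for each $g\in G$, $$\sum_{m\ge0}\#(mP_g\cap M')\,t^m=\frac{\sum_{v\in\mathrm{BOX}(P)^g}t^{u(v)}}{(1-t)\det(I-\rho(g)t)},$$ where $\mathrm{BOX}(P)^g$ is the set of elements of $\mathrm{BOX}(P)$ fixed by $g$. Moreover, the multiplicity of the trivial character in $\phi_i$ equals the number of $G$-orbits on $\{v\in\mathrm{BOX}(P):u(v)=i\}$. The multiplicity of $\det(\rho)$ in $\phi_i$ equals the number of such orbits whose isotropy subgroup is contained in $\{g:\det\rho(g)=1\}$.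
   Context: Setup. Let $G$ be a finite group acting linearly on a lattice $M'=M\oplus\mathbb{Z}$ of rank $d+1$, such that the projection $M'\to\mathbb{Z}$ onto the second factor is $G$-invariant. Let $P\subseteq M_\mathbb{R}\times\{1\}$ be a $d$-dimensional $G$-invariant lattice polytope (vertices in $M'$). Let $\rho:G\to GL(M)$ be the induced action on $M=M\times\{0\}$, with complexification $M_\mathbb{C}$. For $m\ge1$, $\chi_{mP}$ is the permutation character of $G$ on $mP\cap M'$, and $\chi_{0P}=1$ is the trivial character. $R(G)$ is the ring of virtual characters. Set $\det(I-\rho t)=\sum_{i=0}^d(-1)^i\wedge^iM_\mathbb{C}\,t^i\in R(G)[t]$; its value at $g$ is $\det(I-\rho(g)t)$. Define $\phi[t]=\sum_{i\ge0}\phi_it^i\in R(G)[[t]]$ by $$\sum_{m\ge0}\chi_{mP}t^m=\frac{\phi[t]}{(1-t)\det(I-\rho t)}.$$ For $g\in G$, $P_g=\{x\in P: gx=x\}$. *)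

theory Defs
  imports "HOL-Analysis.Analysis" "HOL-Computational_Algebra.Formal_Power_Series"
    "HOL-Algebra.Group"
begin

text \<open>The lattice M' = M \<oplus> Z is modelled as (int^'d) \<times> int, with M = int^'d and d = CARD('d).
  A linear action of g on M' preserving the projection u = snd has the form
  (x,h) \<mapsto> (A g x + h b g, h); A g is the matrix of rho(g) on M = M \<times> {0}.\<close>

definition latact :: "('g \<Rightarrow> int^'d^'d) \<Rightarrow> ('g \<Rightarrow> int^'d) \<Rightarrow> 'g \<Rightarrow> (int^'d) \<times> int \<Rightarrow> (int^'d) \<times> int" where
  "latact A b g v = (A g *v fst v + snd v *s b g, snd v)"

definition realact :: "('g \<Rightarrow> int^'d^'d) \<Rightarrow> ('g \<Rightarrow> int^'d) \<Rightarrow> 'g \<Rightarrow> (real^'d) \<times> real \<Rightarrow> (real^'d) \<times> real" where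
  "realact A b g y = ((\<chi> i j. real_of_int (A g $ i $ j)) *v fst y
                      + snd y *\<^sub>R (\<chi> i. real_of_int (b g $ i)), snd y)"

definition emb :: "(int^'d) \<times> int \<Rightarrow> (real^'d) \<times> real" where
  "emb v = ((\<chi> i. real_of_int (fst v $ i)), real_of_int (snd v))"

definition latpts :: "nat \<Rightarrow> ((real^'d) \<times> real) set \<Rightarrow> ((int^'d) \<times> int) set" where
  "latpts m S = {v. emb v \<in> (\<lambda>y. real m *\<^sub>R y) ` S}"

definition fixpart :: "('g \<Rightarrow> int^'d^'d) \<Rightarrow> ('g \<Rightarrow> int^'d) \<Rightarrow> 'g \<Rightarrow> ((real^'d) \<times> real) set \<Rightarrow> ((real^'d) \<times> real) set" where
  "fixpart A b g S = {x \<in> S. realact A b g x = x}"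

definition permchar :: "('g \<Rightarrow> int^'d^'d) \<Rightarrow> ('g \<Rightarrow> int^'d) \<Rightarrow> ((real^'d) \<times> real) set \<Rightarrow> nat \<Rightarrow> 'g \<Rightarrow> complex" where
  "permchar A b P m g = of_nat (card {v \<in> latpts m P. latact A b g v = v})"

definition detIrho :: "('g \<Rightarrow> int^'d^'d) \<Rightarrow> 'g \<Rightarrow> complex fps" where
  "detIrho A g = det (\<chi> i j. (if i = j then 1 else 0) - fps_const (of_int (A g $ i $ j)) * fps_X)"

text \<open>phi[t] evaluated at g: the unique power series with
  sum_m chi_{mP}(g) t^m = phi[t](g) / ((1-t) det(I - rho(g) t)).\<close>
definition phi :: "('g \<Rightarrow> int^'d^'d) \<Rightarrow> ('g \<Rightarrow> int^'d) \<Rightarrow> ((real^'d) \<times> real) set \<Rightarrow> 'g \<Rightarrow> complex fps" where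
  "phi A b P g = Abs_fps (\<lambda>m. permchar A b P m g) * (1 - fps_X) * detIrho A g"

definition BOX :: "nat \<Rightarrow> (nat \<Rightarrow> (int^'d) \<times> int) \<Rightarrow> ((int^'d) \<times> int) set" where
  "BOX d vs = {v. \<exists>a::nat \<Rightarrow> real. (\<forall>i\<le>d. 0 \<le> a i \<and> a i < 1)
                   \<and> emb v = (\<Sum>i\<le>d. a i *\<^sub>R emb (vs i))}"

text \<open>Inner product of class functions on a finite group; the multiplicity of an
  irreducible character psi in a virtual character chi is char_inner G chi psi.\<close>
definition char_inner :: "('g, 'c) monoid_scheme \<Rightarrow> ('g \<Rightarrow> complex) \<Rightarrow> ('g \<Rightarrow> complex) \<Rightarrow> complex" where
  "char_inner G f h = (\<Sum>g\<in>carrier G. f g * cnj (h g)) / of_nat (card (carrier G))"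

definition act_orbit :: "('g, 'c) monoid_scheme \<Rightarrow> ('g \<Rightarrow> 'x \<Rightarrow> 'x) \<Rightarrow> 'x \<Rightarrow> 'x set" where
  "act_orbit G f x = (\<lambda>g. f g x) ` carrier G"

definition act_stabilizer :: "('g, 'c) monoid_scheme \<Rightarrow> ('g \<Rightarrow> 'x \<Rightarrow> 'x) \<Rightarrow> 'x \<Rightarrow> 'g set" where
  "act_stabilizer G f x = {g \<in> carrier G. f g x = x}"

definition act_orbits :: "('g, 'c) monoid_scheme \<Rightarrow> ('g \<Rightarrow> 'x \<Rightarrow> 'x) \<Rightarrow> 'x set \<Rightarrow> 'x set set" where
  "act_orbits G f S = act_orbit G f ` S"

end

theory Submission
  imports Defs "HOL-Combinatorics.Cycles" "HOL-Algebra.Group_Action"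
begin

text \<open>
  The vertices \<open>v\<^sub>0, \<dots>, v\<^sub>d\<close> of the simplex form a basis of \<open>M'\<^sub>\<real>\<close>.  Splitting
  barycentric coordinates into fractional and integral parts writes every lattice point of \<open>mP\<close>
  uniquely as \<open>w + \<Sum> n\<^sub>i v\<^sub>i\<close> with \<open>w \<in> BOX(P)\<close>, \<open>n\<^sub>i \<in> \<nat>\<close> and \<open>u(w) + \<Sum> n\<^sub>i = m\<close>.
  An element \<open>g\<close> permutes the vertices by some \<open>\<sigma>\<close>, and fixes such a point iff it fixes \<open>w\<close>
  and \<open>n\<close> is constant on the cycles of \<open>\<sigma>\<close>.  Hence \<open>\<Sum>\<^sub>m \<chi>\<^sub>m\<^sub>P(g) t\<^sup>m\<close> is the box polynomial of
  \<open>BOX(P)\<^sup>g\<close> divided by \<open>\<Prod> (1 - t\<^sup>\<ell>)\<close>, the product over the cycles of \<open>\<sigma>\<close> with lengths \<open>\<ell>\<close>.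
  That product is \<open>det(I - P\<^sub>\<sigma> t)\<close>, and it equals \<open>(1 - t) det(I - \<rho>(g) t)\<close> because in the vertex
  basis \<open>g\<close> acts on \<open>M'\<^sub>\<real>\<close> by the permutation matrix \<open>P\<^sub>\<sigma>\<close>.  The multiplicity statements are
  Burnside-type counts for the permutation action of \<open>G\<close> on the levels of \<open>BOX(P)\<close>: a linear
  character summed over a stabilizer gives its order or zero.
\<close>

section \<open>Counting series\<close>

definition count_fps :: "'x set \<Rightarrow> ('x \<Rightarrow> nat) \<Rightarrow> complex fps" where
  "count_fps W wt = Abs_fps (\<lambda>k. of_nat (card {x\<in>W. wt x = k}))"

lemma count_fps_nth: "fps_nth (count_fps W wt) k = of_nat (card {x\<in>W. wt x = k})"
  by (simp add: count_fps_def)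

lemma count_fps_eq_sum:
  assumes "finite W" shows "count_fps W wt = (\<Sum>x\<in>W. fps_X ^ wt x)"
proof (rule fps_ext)
  fix k
  have "fps_nth (\<Sum>x\<in>W. fps_X ^ wt x) k = (\<Sum>x\<in>W. if wt x = k then 1 else (0::complex))"
    by (simp add: fps_sum_nth) (metis)
  also have "\<dots> = of_nat (card {x\<in>W. wt x = k})"
    using assms by (simp add: sum.If_cases Int_def)
  finally show "fps_nth (count_fps W wt) k = fps_nth (\<Sum>x\<in>W. fps_X ^ wt x) k"
    by (simp add: count_fps_nth)
qed

lemma count_fps_Times:
  assumes fa: "\<And>k. finite {a\<in>A. wa a = k}" and fb: "\<And>k. finite {b\<in>B. wb b = k}"
  shows "count_fps (A \<times> B) (\<lambda>(a,b). wa a + wb b) = count_fps A wa * count_fps B wb"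
proof (rule fps_ext)
  fix n
  have eq: "{x\<in>A \<times> B. (\<lambda>(a,b). wa a + wb b) x = n}
      = (\<Union>i\<in>{0..n}. {a\<in>A. wa a = i} \<times> {b\<in>B. wb b = n - i})"
    by auto
  have "card {x\<in>A \<times> B. (\<lambda>(a,b). wa a + wb b) x = n}
     = (\<Sum>i\<in>{0..n}. card ({a\<in>A. wa a = i} \<times> {b\<in>B. wb b = n - i}))"
    unfolding eq by (rule card_UN_disjoint) (auto simp: fa fb)
  then show "fps_nth (count_fps (A \<times> B) (\<lambda>(a,b). wa a + wb b)) n
      = fps_nth (count_fps A wa * count_fps B wb) n"
    by (simp add: count_fps_nth fps_mult_nth card_cartesian_product)
qed

lemma count_fps_bij_betw:
  assumes f: "bij_betw f W W'" and wt: "\<And>x. x \<in> W \<Longrightarrow> wt' (f x) = wt x"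
  shows "count_fps W' wt' = count_fps W wt"
proof (rule fps_ext)
  fix k
  have "bij_betw f {x\<in>W. wt x = k} (f ` {x\<in>W. wt x = k})"
    by (rule bij_betw_subset [OF f]) auto
  moreover have "f ` {x\<in>W. wt x = k} = {y\<in>W'. wt' y = k}"
  proof
    show "f ` {x\<in>W. wt x = k} \<subseteq> {y\<in>W'. wt' y = k}"
      using f wt by (auto simp: bij_betw_def)
    show "{y\<in>W'. wt' y = k} \<subseteq> f ` {x\<in>W. wt x = k}"
    proof
      fix y assume y: "y \<in> {y\<in>W'. wt' y = k}"
      then obtain x where "x \<in> W" "y = f x" using f by (auto simp: bij_betw_def)
      then show "y \<in> f ` {x\<in>W. wt x = k}" using y wt by auto
    qed
  qed
  ultimately show "fps_nth (count_fps W' wt') k = fps_nth (count_fps W wt) k"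
    by (simp add: count_fps_nth bij_betw_same_card)
qed

section \<open>Determinants of matrices indexed by a finite set\<close>

definition det_on :: "'i set \<Rightarrow> ('i \<Rightarrow> 'i \<Rightarrow> 'a::comm_ring_1) \<Rightarrow> 'a" where
  "det_on S N = (\<Sum>p\<in>{p. p permutes S}. of_int (sign p) * (\<Prod>i\<in>S. N i (p i)))"

lemma det_eq_det_on: "det (M::'a::comm_ring_1^'n^'n) = det_on UNIV (\<lambda>i j. M$i$j)"
  by (simp add: det_def det_on_def)

lemma det_on_cong:
  assumes "\<And>i j. i\<in>S \<Longrightarrow> j\<in>S \<Longrightarrow> N i j = N' i j"
  shows "det_on S N = det_on S N'"
  unfolding det_on_def
proof (rule sum.cong[OF refl])
  fix p assume "p \<in> {p. p permutes S}"
  then have "\<And>i. i \<in> S \<Longrightarrow> p i \<in> S" by (simp add: permutes_in_image)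
  then show "of_int (sign p) * (\<Prod>i\<in>S. N i (p i)) = of_int (sign p) * (\<Prod>i\<in>S. N' i (p i))"
    using assms by (metis (no_types, lifting) prod.cong)
qed

lemma det_on_empty: "det_on {} N = 1"
  by (simp add: det_on_def)

lemma det_on_singleton: "det_on {a} N = N a a"
  by (simp add: det_on_def)

lemma det_on_reindex:
  assumes inj: "inj_on f A" and fin: "finite A"
  shows "det_on (f ` A) N = det_on A (\<lambda>i j. N (f i) (f j))"
proof -
  have bij: "bij_betw f A (f ` A)" using inj by (simp add: bij_betw_imageI)
  let ?m = "map_permutation A f"
  have b2: "bij_betw ?m {p. p permutes A} {q. q permutes f ` A}"
  proof (rule bij_betw_byWitness[where f' = "map_permutation (f ` A) (inv_into A f)"])
    show "\<forall>p\<in>{p. p permutes A}. map_permutation (f ` A) (inv_into A f) (?m p) = p"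
      using map_permutation_compose_inv[OF bij] inj by auto
    show "\<forall>q\<in>{q. q permutes f ` A}. ?m (map_permutation (f ` A) (inv_into A f) q) = q"
    proof
      fix q assume q: "q \<in> {q. q permutes f ` A}"
      have bi: "bij_betw (inv_into A f) (f ` A) A" using bij by (rule bij_betw_inv_into)
      show "?m (map_permutation (f ` A) (inv_into A f) q) = q"
        by (rule map_permutation_compose_inv[OF bi]) (use q inj in auto)
    qed
    show "?m ` {p. p permutes A} \<subseteq> {q. q permutes f ` A}"
      using map_permutation_permutes[OF bij] by auto
    show "map_permutation (f ` A) (inv_into A f) ` {q. q permutes f ` A} \<subseteq> {p. p permutes A}"
      using map_permutation_permutes[OF bij_betw_inv_into[OF bij]] by auto
  qed
  have "det_on (f ` A) N = (\<Sum>p\<in>{p. p permutes A}. of_int (sign (?m p)) * (\<Prod>i\<in>f ` A. N i (?m p i)))"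
    unfolding det_on_def by (rule sum.reindex_bij_betw[OF b2, symmetric])
  also have "\<dots> = (\<Sum>p\<in>{p. p permutes A}. of_int (sign p) * (\<Prod>i\<in>A. N (f i) (f (p i))))"
  proof (rule sum.cong[OF refl])
    fix p assume p: "p \<in> {p. p permutes A}"
    have "sign (?m p) = sign p" using sign_map_permutation[OF inj _ fin] p by auto
    moreover have "(\<Prod>i\<in>f ` A. N i (?m p i)) = (\<Prod>i\<in>A. N (f i) (f (p i)))"
      by (subst prod.reindex[OF inj]) (simp add: map_permutation_apply[OF inj])
    ultimately show "of_int (sign (?m p)) * (\<Prod>i\<in>f ` A. N i (?m p i)) = of_int (sign p) * (\<Prod>i\<in>A. N (f i) (f (p i)))"
      by simp
  qed
  finally show ?thesis by (simp add: det_on_def)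
qed

lemma permutes_stable_complement:
  assumes p: "p permutes S" and finC: "finite C" and pC: "\<forall>i\<in>C. p i \<in> C" and i: "i \<in> S - C"
  shows "p i \<in> S - C"
proof -
  have injp: "inj p" using p by (rule permutes_inj)
  have ic: "inj_on p C" using injp by (rule inj_on_subset) simp
  have "p ` C \<subseteq> C" using pC by blast
  then have pCC: "p ` C = C" using endo_inj_surj[OF finC _ ic] by simp
  have "p i \<in> S" using i p by (simp add: permutes_in_image)
  moreover have "p i \<notin> C"
  proof
    assume "p i \<in> C"
    then obtain j where j: "j \<in> C" "p i = p j" using pCC by blast
    then have "i = j" using injD[OF injp] by blast
    then show False using i j by simp
  qed
  ultimately show ?thesis by simp
qed

lemma permutes_restrict_stable:
  assumes p: "p permutes S" and finC: "finite C" and pC: "\<forall>i\<in>C. p i \<in> C"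
  shows "(\<lambda>i. if i \<in> C then p i else i) permutes C"
proof (rule inj_imp_permutes[OF _ finC])
  have injp: "inj p" using p by (rule permutes_inj)
  show "inj_on (\<lambda>i. if i \<in> C then p i else i) C"
  proof (rule inj_onI)
    fix x y assume "x \<in> C" "y \<in> C" "(if x \<in> C then p x else x) = (if y \<in> C then p y else y)"
    then have "p x = p y" by simp
    then show "x = y" using injD[OF injp] by blast
  qed
  show "\<And>x. x \<in> C \<Longrightarrow> (if x \<in> C then p x else x) \<in> C" using pC by simp
  show "\<And>x. x \<notin> C \<Longrightarrow> (if x \<in> C then p x else x) = x" by simp
qed


lemma restrict_comp_permutes_disjoint:
  assumes q: "q permutes C" and r: "r permutes D" and CD: "C \<inter> D = {}"
  shows "(\<lambda>i. if i \<in> C then (q \<circ> r) i else i) = q"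
    and "(\<lambda>i. if i \<in> D then (q \<circ> r) i else i) = r"
proof -
  have "(if i \<in> C then (q \<circ> r) i else i) = q i" for i
  proof (cases "i \<in> C")
    case True
    then have "i \<notin> D" using CD by blast
    then show ?thesis using True permutes_not_in [OF r] by simp
  next
    case False then show ?thesis using permutes_not_in [OF q False] by simp
  qed
  then show "(\<lambda>i. if i \<in> C then (q \<circ> r) i else i) = q" by blast
  have "(if i \<in> D then (q \<circ> r) i else i) = r i" for i
  proof (cases "i \<in> D")
    case True
    then have "r i \<notin> C" using r CD by (auto simp: permutes_in_image)
    then show ?thesis using True permutes_not_in [OF q] by simp
  next
    case False then show ?thesis using permutes_not_in [OF r False] by simp
  qed
  then show "(\<lambda>i. if i \<in> D then (q \<circ> r) i else i) = r" by blast
qed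

lemma comp_restrict_permutes_stable:
  assumes p: "p permutes S" and finC: "finite C" and pC: "\<forall>i\<in>C. p i \<in> C"
  shows "(\<lambda>i. if i \<in> C then p i else i) \<circ> (\<lambda>i. if i \<in> S - C then p i else i) = p"
proof
  fix i
  show "((\<lambda>i. if i \<in> C then p i else i) \<circ> (\<lambda>i. if i \<in> S - C then p i else i)) i = p i"
  proof (cases "i \<in> S - C")
    case True
    then have "p i \<notin> C" using permutes_stable_complement [OF p finC pC] by blast
    then show ?thesis using True by simp
  next
    case False
    then show ?thesis using permutes_not_in [OF p] by (cases "i \<in> C") auto
  qed
qed

lemma comp_permutes_stable:
  assumes q: "q permutes C" and r: "r permutes S - C" and CS: "C \<subseteq> S"
  shows "q \<circ> r permutes S \<and> (\<forall>i\<in>C. (q \<circ> r) i \<in> C)"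
proof
  show "q \<circ> r permutes S"
    using permutes_subset [OF q CS] permutes_subset [OF r] by (blast intro: permutes_compose)
  show "\<forall>i\<in>C. (q \<circ> r) i \<in> C"
    using permutes_not_in [OF r] q by (simp add: permutes_in_image)
qed

lemma bij_betw_permutes_stable:
  assumes fin: "finite S" and CS: "C \<subseteq> S"
  shows "bij_betw (\<lambda>x. fst x \<circ> snd x) ({q. q permutes C} \<times> {r. r permutes S - C})
           {p. p permutes S \<and> (\<forall>i\<in>C. p i \<in> C)}"
proof -
  have finC: "finite C" using fin CS finite_subset by blast
  have finD: "finite (S - C)" using fin by simp
  have CD: "C \<inter> (S - C) = {}" by blast
  show ?thesis
  proof (rule bij_betw_byWitness
      [where f' = "\<lambda>p. (\<lambda>i. if i \<in> C then p i else i, \<lambda>i. if i \<in> S - C then p i else i)"])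
    show "\<forall>x\<in>{q. q permutes C} \<times> {r. r permutes S - C}.
        (\<lambda>i. if i \<in> C then (fst x \<circ> snd x) i else i,
         \<lambda>i. if i \<in> S - C then (fst x \<circ> snd x) i else i) = x"
      using restrict_comp_permutes_disjoint [OF _ _ CD] by (auto simp: prod_eq_iff)
    show "\<forall>p\<in>{p. p permutes S \<and> (\<forall>i\<in>C. p i \<in> C)}.
        fst (\<lambda>i. if i \<in> C then p i else i, \<lambda>i. if i \<in> S - C then p i else i)
        \<circ> snd (\<lambda>i. if i \<in> C then p i else i, \<lambda>i. if i \<in> S - C then p i else i) = p"
      using comp_restrict_permutes_stable [OF _ finC] by auto
    show "(\<lambda>x. fst x \<circ> snd x) ` ({q. q permutes C} \<times> {r. r permutes S - C})
        \<subseteq> {p. p permutes S \<and> (\<forall>i\<in>C. p i \<in> C)}"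
      using comp_permutes_stable [OF _ _ CS] by auto
    show "(\<lambda>p. (\<lambda>i. if i \<in> C then p i else i, \<lambda>i. if i \<in> S - C then p i else i))
        ` {p. p permutes S \<and> (\<forall>i\<in>C. p i \<in> C)} \<subseteq> {q. q permutes C} \<times> {r. r permutes S - C}"
    proof (rule image_subsetI)
      fix p assume "p \<in> {p. p permutes S \<and> (\<forall>i\<in>C. p i \<in> C)}"
      then have p: "p permutes S" and pC: "\<forall>i\<in>C. p i \<in> C" by auto
      have "\<forall>i\<in>S - C. p i \<in> S - C" using permutes_stable_complement [OF p finC pC] by blast
      then show "(\<lambda>i. if i \<in> C then p i else i, \<lambda>i. if i \<in> S - C then p i else i)
          \<in> {q. q permutes C} \<times> {r. r permutes S - C}"
        using permutes_restrict_stable [OF p finC pC] permutes_restrict_stable [OF p finD] by simp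
    qed
  qed
qed

lemma prod_comp_permutes_disjoint:
  assumes q: "q permutes C" and r: "r permutes D" and CD: "C \<inter> D = {}"
    and fin: "finite C" "finite D"
  shows "(\<Prod>i\<in>C \<union> D. N i ((q \<circ> r) i)) = (\<Prod>i\<in>C. N i (q i)) * (\<Prod>i\<in>D. N i (r i))"
proof -
  have "(\<Prod>i\<in>C \<union> D. N i ((q \<circ> r) i)) = (\<Prod>i\<in>C. N i ((q \<circ> r) i)) * (\<Prod>i\<in>D. N i ((q \<circ> r) i))"
    using fin CD by (rule prod.union_disjoint)
  also have "(\<Prod>i\<in>C. N i ((q \<circ> r) i)) = (\<Prod>i\<in>C. N i (q i))"
  proof (rule prod.cong [OF refl])
    fix i assume "i \<in> C"
    then have "i \<notin> D" using CD by blast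
    then show "N i ((q \<circ> r) i) = N i (q i)" using permutes_not_in [OF r] by simp
  qed
  also have "(\<Prod>i\<in>D. N i ((q \<circ> r) i)) = (\<Prod>i\<in>D. N i (r i))"
  proof (rule prod.cong [OF refl])
    fix i assume "i \<in> D"
    then have "r i \<notin> C" using r CD by (auto simp: permutes_in_image)
    then show "N i ((q \<circ> r) i) = N i (r i)" using permutes_not_in [OF q] by simp
  qed
  finally show ?thesis .
qed

lemma det_on_block_triangular:
  fixes N :: "'i \<Rightarrow> 'i \<Rightarrow> 'a::comm_ring_1"
  assumes fin: "finite S" and CS: "C \<subseteq> S"
    and z: "\<And>i j. i \<in> C \<Longrightarrow> j \<in> S - C \<Longrightarrow> N i j = 0"
  shows "det_on S N = det_on C N * det_on (S - C) N"
proof -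
  let ?t = "\<lambda>S p. of_int (sign p) * (\<Prod>i\<in>S. N i (p i)) :: 'a"
  let ?stable = "{p. p permutes S \<and> (\<forall>i\<in>C. p i \<in> C)}"
  let ?PC = "{p. p permutes C}" and ?PD = "{p. p permutes S - C}"
  have finC: "finite C" using fin CS finite_subset by blast
  have finD: "finite (S - C)" using fin by simp
  have SU: "S = C \<union> (S - C)" "C \<inter> (S - C) = {}" using CS by auto
  have "det_on S N = sum (?t S) ?stable"
    unfolding det_on_def
  proof (rule sum.mono_neutral_right)
    show "finite {p. p permutes S}" using fin by (simp add: finite_permutations)
    show "\<forall>p\<in>{p. p permutes S} - ?stable. ?t S p = 0"
    proof
      fix p assume "p \<in> {p. p permutes S} - ?stable"
      then obtain i where p: "p permutes S" and i: "i \<in> C" "p i \<notin> C" by blast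
      have "p i \<in> S" using p i CS by (simp add: permutes_in_image subsetD)
      then have "N i (p i) = 0" using z i by simp
      then have "(\<Prod>i\<in>S. N i (p i)) = 0" using fin i CS by (intro prod_zero) blast+
      then show "?t S p = 0" by simp
    qed
  qed blast
  also have "\<dots> = (\<Sum>x\<in>?PC \<times> ?PD. ?t S (fst x \<circ> snd x))"
    by (rule sum.reindex_bij_betw [OF bij_betw_permutes_stable [OF fin CS], symmetric])
  also have "\<dots> = (\<Sum>x\<in>?PC \<times> ?PD. ?t C (fst x) * ?t (S - C) (snd x))"
  proof (rule sum.cong [OF refl])
    fix x assume "x \<in> ?PC \<times> ?PD"
    then have q: "fst x permutes C" and r: "snd x permutes S - C" by auto
    have "sign (fst x \<circ> snd x) = sign (fst x) * sign (snd x)"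
      by (simp add: sign_compose permutes_imp_permutation [OF finC q] permutes_imp_permutation [OF finD r])
    moreover have "(\<Prod>i\<in>S. N i ((fst x \<circ> snd x) i))
        = (\<Prod>i\<in>C. N i (fst x i)) * (\<Prod>i\<in>S - C. N i (snd x i))"
      using prod_comp_permutes_disjoint [OF q r SU(2) finC finD] SU(1) by simp
    ultimately show "?t S (fst x \<circ> snd x) = ?t C (fst x) * ?t (S - C) (snd x)"
      by (simp add: algebra_simps)
  qed
  also have "\<dots> = sum (?t C) ?PC * sum (?t (S - C)) ?PD"
    by (simp only: sum.cartesian_product split_def sum_product)
  finally show ?thesis unfolding det_on_def .
qed
section \<open>The determinant of \<open>I - X P\<close> for a permutation matrix \<open>P\<close>\<close>

definition id_minus_X_perm :: "('i \<Rightarrow> 'i) \<Rightarrow> 'i \<Rightarrow> 'i \<Rightarrow> complex fps" where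
  "id_minus_X_perm p i j = (if i = j then 1 else 0) - (if j = p i then fps_X else 0)"

definition invariant_fns :: "'i set \<Rightarrow> ('i \<Rightarrow> 'i) \<Rightarrow> ('i \<Rightarrow> nat) set" where
  "invariant_fns S p = {n. (\<forall>i. i \<notin> S \<longrightarrow> n i = 0) \<and> (\<forall>i. n (p i) = n i)}"

definition fn_weight :: "'i set \<Rightarrow> ('i \<Rightarrow> nat) \<Rightarrow> nat" where
  "fn_weight S n = (\<Sum>i\<in>S. n i)"

lemma sign_cycle_of_list:
  assumes "distinct cs" "cs \<noteq> []"
  shows "sign (cycle_of_list cs) = (-1) ^ (length cs - 1)"
  using assms
proof (induction cs rule: cycle_of_list.induct)
  case (1 i j cs)
  then have ij: "i \<noteq> j" by auto
  have "sign (cycle_of_list (i # j # cs)) = sign (Transposition.transpose i j) * sign (cycle_of_list (j # cs))"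
    by (simp add: sign_compose permutation_swap_id permutation_of_cycle)
  also have "\<dots> = - ((-1) ^ (length (j # cs) - 1))"
    using 1 ij by (simp add: sign_swap_id)
  also have "\<dots> = (-1) ^ (length (i # j # cs) - 1)" by simp
  finally show ?case .
next
  case ("2_1") then show ?case by simp
next
  case ("2_2" v) then show ?case by (simp add: sign_id)
qed

lemma cycle_of_list_nth:
  assumes "distinct cs" "i < length cs"
  shows "cycle_of_list cs (cs ! i) = cs ! (Suc i mod length cs)"
proof -
  have "map (cycle_of_list cs ^^ 1) cs = rotate 1 cs" by (rule cyclic_rotation[OF assms(1)])
  then have "map (cycle_of_list cs) cs = rotate1 cs" by simp
  then have "map (cycle_of_list cs) cs ! i = rotate1 cs ! i" by simp
  moreover have "cs \<noteq> []" using assms(2) by auto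
  ultimately show ?thesis using assms(2) by (simp add: nth_rotate1[OF assms(2)])
qed

lemma cycle_of_list_propagate:
  assumes d: "distinct cs" and i: "i < length cs"
    and F: "\<And>x. x \<in> set cs \<Longrightarrow> Q x \<Longrightarrow> Q (cycle_of_list cs x)" and Qi: "Q (cs ! i)"
  shows "\<forall>y\<in>set cs. Q y"
proof -
  let ?L = "length cs"
  have L: "?L > 0" using i by (metis gr_zeroI less_nat_zero_code)
  have k: "Q (cs ! ((i + k) mod ?L))" for k
  proof (induction k)
    case 0 then show ?case using Qi i by simp
  next
    case (Suc k)
    have m: "(i + k) mod ?L < ?L" using L by simp
    have "cycle_of_list cs (cs ! ((i + k) mod ?L)) = cs ! (Suc ((i + k) mod ?L) mod ?L)"
      by (rule cycle_of_list_nth[OF d m])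
    also have "Suc ((i + k) mod ?L) mod ?L = (i + Suc k) mod ?L" by (simp add: mod_Suc_eq)
    finally have e: "cycle_of_list cs (cs ! ((i + k) mod ?L)) = cs ! ((i + Suc k) mod ?L)" .
    have "cs ! ((i + k) mod ?L) \<in> set cs" using m by simp
    then have "Q (cycle_of_list cs (cs ! ((i + k) mod ?L)))" using F Suc by blast
    then show ?case using e by simp
  qed
  show ?thesis
  proof
    fix y assume "y \<in> set cs"
    then obtain j where j: "j < ?L" "y = cs ! j" by (auto simp: in_set_conv_nth)
    have "(i + (j + ?L - i)) mod ?L = j" using j i by simp
    then show "Q y" using k[of "j + ?L - i"] j by simp
  qed
qed

lemma cycle_of_list_in_set: "x \<in> set cs \<Longrightarrow> cycle_of_list cs x \<in> set cs"
  using cycle_permutes [of cs] by (simp add: permutes_in_image)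

lemma cycle_of_list_no_fixpoint:
  assumes d: "distinct cs" and L: "length cs \<ge> 2" and x: "x \<in> set cs"
  shows "cycle_of_list cs x \<noteq> x"
proof -
  obtain i where i: "i < length cs" "x = cs ! i" using x by (auto simp: in_set_conv_nth)
  have "Suc i mod length cs \<noteq> i"
  proof (cases "Suc i < length cs")
    case True then show ?thesis by simp
  next
    case False then have "Suc i = length cs" using i by simp
    then show ?thesis using L by simp
  qed
  moreover have "Suc i mod length cs < length cs" by (rule mod_less_divisor) (use i in auto)
  ultimately have "cs ! (Suc i mod length cs) \<noteq> cs ! i" using d i by (simp add: nth_eq_iff_index_eq)
  then show ?thesis using cycle_of_list_nth[OF d i(1)] i by simp
qed

lemma neg_one_power_mult_minus_power: "((-1::'a::comm_ring_1)^m) * (- x)^Suc m = - (x^Suc m)"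
proof -
  have "(- x)^Suc m = (-1)^Suc m * x^Suc m" by (rule power_minus)
  then have "((-1::'a)^m) * (- x)^Suc m = - (((-1)^m * (-1)^m) * x^Suc m)" by (simp add: algebra_simps)
  then show ?thesis by (simp add: minus_one_mult_self)
qed

lemma permutes_cycle_of_list_cases:
  assumes d: "distinct cs" and p: "p permutes set cs"
    and alt: "\<And>i. i \<in> set cs \<Longrightarrow> p i = i \<or> p i = cycle_of_list cs i"
  shows "p = id \<or> p = cycle_of_list cs"
proof -
  let ?c = "cycle_of_list cs" and ?C = "set cs" and ?L = "length cs"
  have cperm: "?c permutes ?C" by (rule cycle_permutes)
  have injp: "inj p" using p by (rule permutes_inj)
  define F where "F = {i\<in>?C. p i \<noteq> i}"
  show ?thesis
  proof (cases "F = {}")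
    case True
    have "p i = i" for i
    proof (cases "i \<in> ?C")
      case True then show ?thesis using \<open>F = {}\<close> F_def by blast
    next
      case False then show ?thesis using permutes_not_in[OF p] by simp
    qed
    then show ?thesis by (simp add: fun_eq_iff)
  next
    case False
    then obtain x where xF: "x \<in> F" by blast
    then have xC: "x \<in> ?C" using F_def by simp
    then obtain i where i: "i < ?L" "x = cs ! i" by (auto simp: in_set_conv_nth)
    have clos: "?c y \<in> F" if "y \<in> ?C" "y \<in> F" for y
    proof -
      have py: "p y = ?c y" using alt[OF that(1)] that(2) F_def by auto
      have cy: "?c y \<in> ?C" using cycle_of_list_in_set [OF that(1)] .
      show ?thesis
      proof (rule ccontr)
        assume "?c y \<notin> F"
        then have "p (?c y) = ?c y" using cy F_def by simp
        then have "p (?c y) = p y" using py by simp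
        then have "?c y = y" using injD[OF injp] by blast
        then show False using py that(2) F_def by simp
      qed
    qed
    have allF: "\<forall>y\<in>?C. y \<in> F"
      by (rule cycle_of_list_propagate[OF d i(1)]) (use clos xF i in auto)
    have "p y = ?c y" for y
    proof (cases "y \<in> ?C")
      case True
      then have "y \<in> F" using allF by blast
      then show ?thesis using alt[OF True] F_def by auto
    next
      case False
      then show ?thesis using permutes_not_in[OF p False] permutes_not_in[OF cperm False] by simp
    qed
    then show ?thesis by (simp add: fun_eq_iff)
  qed
qed

lemma det_on_cycle_two_terms:
  assumes d: "distinct cs"
  defines "t \<equiv> \<lambda>p. of_int (sign p) * (\<Prod>i\<in>set cs. id_minus_X_perm (cycle_of_list cs) i (p i))"
  shows "det_on (set cs) (id_minus_X_perm (cycle_of_list cs)) = sum t {id, cycle_of_list cs}"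
  unfolding det_on_def t_def
proof (rule sum.mono_neutral_left [symmetric])
  show "finite {p. p permutes set cs}" by (simp add: finite_permutations)
  show "{id, cycle_of_list cs} \<subseteq> {p. p permutes set cs}"
    by (simp add: permutes_id cycle_permutes)
  show "\<forall>p\<in>{p. p permutes set cs} - {id, cycle_of_list cs}.
      of_int (sign p) * (\<Prod>i\<in>set cs. id_minus_X_perm (cycle_of_list cs) i (p i)) = 0"
  proof
    fix p assume p: "p \<in> {p. p permutes set cs} - {id, cycle_of_list cs}"
    then have "\<not> (\<forall>i\<in>set cs. p i = i \<or> p i = cycle_of_list cs i)"
      using permutes_cycle_of_list_cases [OF d] by blast
    then obtain i where "i \<in> set cs" "i \<noteq> p i" "p i \<noteq> cycle_of_list cs i" by metis
    then have "\<exists>i\<in>set cs. id_minus_X_perm (cycle_of_list cs) i (p i) = 0"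
      by (intro bexI [of _ i]) (simp_all add: id_minus_X_perm_def)
    then show "of_int (sign p) * (\<Prod>i\<in>set cs. id_minus_X_perm (cycle_of_list cs) i (p i)) = 0"
      by (simp add: prod_zero)
  qed
qed

lemma det_on_cycle:
  assumes d: "distinct cs" and ne: "cs \<noteq> []"
  shows "det_on (set cs) (id_minus_X_perm (cycle_of_list cs)) = 1 - fps_X ^ length cs"
proof (cases "length cs = 1")
  case True
  then obtain a where "cs = [a]" by (cases cs) auto
  then show ?thesis by (simp add: det_on_singleton id_minus_X_perm_def)
next
  case False
  let ?c = "cycle_of_list cs" and ?C = "set cs" and ?L = "length cs"
  let ?t = "\<lambda>p. of_int (sign p) * (\<Prod>i\<in>?C. id_minus_X_perm ?c i (p i))"
  have "?L > 0" using ne by simp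
  then have L2: "?L \<ge> 2" using False by linarith
  have no_fix: "i \<noteq> ?c i" if "i \<in> ?C" for i
    using cycle_of_list_no_fixpoint [OF d L2 that] by simp
  have cid: "?c \<noteq> id"
    using no_fix [of "cs ! 0"] ne by auto
  have "det_on ?C (id_minus_X_perm ?c) = ?t id + ?t ?c"
    using det_on_cycle_two_terms [OF d] cid by (simp add: sum.insert)
  also have "?t id = 1"
    using no_fix by (simp add: id_minus_X_perm_def)
  also have "?t ?c = - (fps_X ^ ?L)"
  proof -
    have pr: "(\<Prod>i\<in>?C. id_minus_X_perm ?c i (?c i)) = (- fps_X) ^ ?L"
      using no_fix d by (simp add: id_minus_X_perm_def distinct_card)
    obtain m where m: "?L = Suc m" using ne by (cases cs) auto
    have s: "sign ?c = (-1) ^ m" using sign_cycle_of_list [OF d ne] m by simp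
    have "?t ?c = of_int ((-1) ^ m) * (- fps_X) ^ Suc m" unfolding pr s m ..
    also have "\<dots> = (-1) ^ m * (- fps_X) ^ Suc m" by simp
    also have "\<dots> = - (fps_X ^ Suc m)" by (rule neg_one_power_mult_minus_power)
    finally show ?thesis using m by simp
  qed
  finally show ?thesis by simp
qed

lemma finite_invariant_fns_weight:
  assumes "finite S" shows "finite {n\<in>invariant_fns S p. fn_weight S n = k}"
proof (rule finite_subset)
  show "{n\<in>invariant_fns S p. fn_weight S n = k} \<subseteq> (\<lambda>f i. if i \<in> S then f i else 0) ` (PiE S (\<lambda>_. {..k}))"
  proof
    fix n assume n: "n \<in> {n\<in>invariant_fns S p. fn_weight S n = k}"
    have "n = (\<lambda>i. if i \<in> S then restrict n S i else 0)"
      using n by (auto simp: invariant_fns_def fun_eq_iff)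
    moreover have "restrict n S \<in> PiE S (\<lambda>_. {..k})"
    proof -
      have "n i \<le> k" if "i \<in> S" for i
        using n member_le_sum[of i S n] that assms by (auto simp: fn_weight_def)
      then show ?thesis by auto
    qed
    ultimately show "n \<in> (\<lambda>f i. if i \<in> S then f i else 0) ` (PiE S (\<lambda>_. {..k}))" by blast
  qed
  show "finite ((\<lambda>f i. if i \<in> S then f i else 0) ` (PiE S (\<lambda>_. {..k})))"
    using assms by (intro finite_imageI finite_PiE) auto
qed

lemma count_fps_invariant_fns_empty: "count_fps (invariant_fns {} p) (fn_weight {}) = 1"
proof (rule fps_ext)
  fix k
  have "{n \<in> invariant_fns {} p. fn_weight {} n = k} = (if k = 0 then {\<lambda>_. 0} else {})"
    by (auto simp: invariant_fns_def fn_weight_def fun_eq_iff)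
  then show "fps_nth (count_fps (invariant_fns {} p) (fn_weight {})) k = fps_nth 1 k" by (simp add: count_fps_nth)
qed

lemma invariant_fns_cycle_of_list:
  assumes d: "distinct cs" and ne: "cs \<noteq> []"
  shows "invariant_fns (set cs) (cycle_of_list cs) = range (\<lambda>m i. if i \<in> set cs then m else 0)"
proof
  show "invariant_fns (set cs) (cycle_of_list cs) \<subseteq> range (\<lambda>m i. if i \<in> set cs then m else 0)"
  proof
    fix n assume n: "n \<in> invariant_fns (set cs) (cycle_of_list cs)"
    have "\<forall>y\<in>set cs. n y = n (cs ! 0)"
      by (rule cycle_of_list_propagate [OF d]) (use n ne in \<open>auto simp: invariant_fns_def\<close>)
    then have "n = (\<lambda>i. if i \<in> set cs then n (cs ! 0) else 0)"
      using n by (auto simp: invariant_fns_def fun_eq_iff)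
    then show "n \<in> range (\<lambda>m i. if i \<in> set cs then m else 0)" by blast
  qed
  show "range (\<lambda>m i. if i \<in> set cs then m else 0) \<subseteq> invariant_fns (set cs) (cycle_of_list cs)"
  proof clarify
    fix m :: nat
    have "(if cycle_of_list cs i \<in> set cs then m else 0) = (if i \<in> set cs then m else 0)" for i
      using cycle_of_list_in_set [of _ cs] permutes_not_in [OF cycle_permutes [of cs]]
      by (cases "i \<in> set cs") auto
    then show "(\<lambda>i. if i \<in> set cs then m else 0) \<in> invariant_fns (set cs) (cycle_of_list cs)"
      by (simp add: invariant_fns_def)
  qed
qed

lemma count_fps_invariant_fns_cycle:
  assumes d: "distinct cs" and ne: "cs \<noteq> []"
  shows "count_fps (invariant_fns (set cs) (cycle_of_list cs)) (fn_weight (set cs))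
    = Abs_fps (\<lambda>k. if length cs dvd k then 1 else 0)"
proof (rule fps_ext)
  fix k
  let ?L = "length cs" and ?const = "\<lambda>m i. if i \<in> set cs then m else (0::nat)"
  have L: "?L > 0" using ne by simp
  have "fn_weight (set cs) (?const m) = ?L * m" for m
    using d by (simp add: fn_weight_def distinct_card)
  then have eq: "{n \<in> invariant_fns (set cs) (cycle_of_list cs). fn_weight (set cs) n = k}
      = ?const ` {m. ?L * m = k}"
    by (auto simp: invariant_fns_cycle_of_list [OF d ne])
  have inj: "inj ?const"
  proof (rule injI)
    fix x y assume "?const x = ?const y"
    then have "?const x (cs ! 0) = ?const y (cs ! 0)" by (rule fun_cong)
    then show "x = y" using nth_mem [OF L] by simp
  qed
  have "card {n \<in> invariant_fns (set cs) (cycle_of_list cs). fn_weight (set cs) n = k}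
      = card {m. ?L * m = k}"
    unfolding eq by (rule card_image) (rule inj_on_subset [OF inj], simp)
  also have "{m. ?L * m = k} = (if ?L dvd k then {k div ?L} else {})"
    using L by auto
  finally show "fps_nth (count_fps (invariant_fns (set cs) (cycle_of_list cs)) (fn_weight (set cs))) k
      = fps_nth (Abs_fps (\<lambda>k. if ?L dvd k then 1 else 0)) k"
    by (simp add: count_fps_nth)
qed

lemma one_minus_X_power_mult_dvd_series:
  fixes L :: nat
  assumes L: "L > 0"
  defines "f \<equiv> Abs_fps (\<lambda>k. if L dvd k then 1 else 0 :: complex)"
  shows "(1 - fps_X ^ L) * f = 1"
proof (rule fps_ext)
  fix n
  have "fps_nth ((1 - fps_X ^ L) * f) n = fps_nth f n - fps_nth (fps_X ^ L * f) n"
    by (simp add: algebra_simps)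
  also have "\<dots> = fps_nth f n - (if n < L then 0 else fps_nth f (n - L))"
    by (simp add: fps_X_power_mult_nth)
  also have "\<dots> = fps_nth 1 n"
  proof (cases "n < L")
    case True
    then show ?thesis using L by (cases "n = 0") (auto simp: f_def dest: dvd_imp_le)
  next
    case False
    then have "n = (n - L) + L" by simp
    then have "L dvd n \<longleftrightarrow> L dvd (n - L)" by (metis dvd_add_left_iff dvd_refl)
    then have e: "fps_nth f n = fps_nth f (n - L)" by (simp add: f_def)
    have n0: "n \<noteq> 0" using False L by linarith
    show ?thesis using False n0 e by simp
  qed
  finally show "fps_nth ((1 - fps_X ^ L) * f) n = fps_nth 1 n" .
qed

lemma det_on_cycle_mult_count_fps:
  assumes d: "distinct cs"
  shows "det_on (set cs) (id_minus_X_perm (cycle_of_list cs))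
    * count_fps (invariant_fns (set cs) (cycle_of_list cs)) (fn_weight (set cs)) = 1"
proof (cases "cs = []")
  case True
  then show ?thesis by (simp add: det_on_empty count_fps_invariant_fns_empty)
next
  case False
  then show ?thesis
    using det_on_cycle [OF d False] count_fps_invariant_fns_cycle [OF d False]
      one_minus_X_power_mult_dvd_series [of "length cs"] by simp
qed

lemma cycle_decomp_permutes:
  assumes "cycle_decomp S p" shows "p permutes S \<and> finite S"
  using assms
proof (induction rule: cycle_decomp.induct)
  case empty then show ?case by (metis finite.emptyI permutes_id)
next
  case (comp I p cs)
  have "cycle_of_list cs permutes set cs \<union> I"
    using cycle_permutes permutes_subset by (metis sup_ge1)
  moreover have "p permutes set cs \<union> I" using comp permutes_subset by (metis sup_ge2)
  ultimately have "cycle_of_list cs \<circ> p permutes set cs \<union> I" by (rule permutes_compose[rotated])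
  moreover have "finite (set cs \<union> I)" using comp by simp
  ultimately show ?case by blast
qed

context
  fixes p :: "'i \<Rightarrow> 'i" and I :: "'i set" and cs :: "'i list"
  assumes pI: "p permutes I" and finI: "finite I"
    and d: "distinct cs" and disj: "set cs \<inter> I = {}"
begin

private abbreviation (input) "c \<equiv> cycle_of_list cs"

private lemma cycle_comp_on_cycle:
  assumes "i \<in> set cs" shows "c (p i) = c i"
proof -
  have "i \<notin> I" using assms disj by blast
  then show ?thesis by (simp add: permutes_not_in [OF pI])
qed

private lemma perm_in_support: "i \<in> I \<Longrightarrow> p i \<in> I"
  using pI by (simp add: permutes_in_image)

private lemma cycle_comp_on_support:
  assumes "i \<in> I" shows "c (p i) = p i"
proof -
  have "p i \<notin> set cs" using perm_in_support [OF assms] disj by blast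
  then show ?thesis by (simp add: permutes_not_in [OF cycle_permutes])
qed

lemma det_on_cycle_comp:
  "det_on (set cs \<union> I) (id_minus_X_perm (c \<circ> p))
    = det_on (set cs) (id_minus_X_perm c) * det_on I (id_minus_X_perm p)"
proof -
  let ?c = "cycle_of_list cs" and ?C = "set cs"
  let ?p = "?c \<circ> p" and ?S = "set cs \<union> I"
  have finS: "finite ?S" using finI by simp
  have SC: "?S - ?C = I" using disj by blast
  note pC = cycle_comp_on_cycle and pIe = cycle_comp_on_support
  have "det_on ?S (id_minus_X_perm ?p) = det_on ?C (id_minus_X_perm ?p) * det_on (?S - ?C) (id_minus_X_perm ?p)"
  proof (rule det_on_block_triangular[OF finS])
    show "?C \<subseteq> ?S" by blast
    fix i j assume i: "i \<in> ?C" and j: "j \<in> ?S - ?C"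
    have "?p i \<in> ?C" using pC[OF i] cycle_of_list_in_set [OF i] by simp
    moreover have "j \<notin> ?C" using j by blast
    ultimately have "j \<noteq> ?p i" "i \<noteq> j" using i by auto
    then show "id_minus_X_perm ?p i j = 0" by (simp add: id_minus_X_perm_def)
  qed
  moreover have "det_on ?C (id_minus_X_perm ?p) = det_on ?C (id_minus_X_perm ?c)"
    by (rule det_on_cong) (simp add: id_minus_X_perm_def pC)
  moreover have "det_on (?S - ?C) (id_minus_X_perm ?p) = det_on I (id_minus_X_perm p)"
    unfolding SC by (rule det_on_cong) (simp add: id_minus_X_perm_def pIe)
  ultimately show ?thesis by simp
qed

private lemma invariant_fns_restrict_cycle:
  assumes n: "n \<in> invariant_fns (set cs \<union> I) (c \<circ> p)"
  shows "(\<lambda>i. if i \<in> set cs then n i else 0) \<in> invariant_fns (set cs) c"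
proof -
  have "(if c i \<in> set cs then n (c i) else 0) = (if i \<in> set cs then n i else 0)" for i
  proof (cases "i \<in> set cs")
    case True
    then have "n (c i) = n ((c \<circ> p) i)" by (simp add: cycle_comp_on_cycle)
    also have "\<dots> = n i" using n by (simp add: invariant_fns_def)
    finally show ?thesis using True cycle_of_list_in_set [OF True] by simp
  next
    case False then show ?thesis by (simp add: permutes_not_in [OF cycle_permutes])
  qed
  then show ?thesis by (simp add: invariant_fns_def)
qed

private lemma invariant_fns_restrict_support:
  assumes n: "n \<in> invariant_fns (set cs \<union> I) (c \<circ> p)"
  shows "(\<lambda>i. if i \<in> I then n i else 0) \<in> invariant_fns I p"
proof -
  have "(if p i \<in> I then n (p i) else 0) = (if i \<in> I then n i else 0)" for i
  proof (cases "i \<in> I")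
    case True
    then have "n (p i) = n ((c \<circ> p) i)" by (simp add: cycle_comp_on_support)
    also have "\<dots> = n i" using n by (simp add: invariant_fns_def)
    finally show ?thesis using True perm_in_support [OF True] by simp
  next
    case False then show ?thesis by (simp add: permutes_not_in [OF pI])
  qed
  then show ?thesis by (simp add: invariant_fns_def)
qed

private lemma invariant_fns_add:
  assumes a: "a \<in> invariant_fns (set cs) c" and b: "b \<in> invariant_fns I p"
  shows "(\<lambda>i. a i + b i) \<in> invariant_fns (set cs \<union> I) (c \<circ> p)"
proof -
  have za: "\<And>i. i \<notin> set cs \<Longrightarrow> a i = 0" and fa: "\<And>i. a (c i) = a i"
    using a by (auto simp: invariant_fns_def)
  have zb: "\<And>i. i \<notin> I \<Longrightarrow> b i = 0" and fb: "\<And>i. b (p i) = b i"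
    using b by (auto simp: invariant_fns_def)
  have "a ((c \<circ> p) i) + b ((c \<circ> p) i) = a i + b i" for i
  proof (cases "i \<in> set cs")
    case True
    then have "c i \<notin> I" "i \<notin> I" using cycle_of_list_in_set [OF True] disj by auto
    then show ?thesis using cycle_comp_on_cycle [OF True] fa [of i] zb by simp
  next
    case False
    show ?thesis
    proof (cases "i \<in> I")
      case True
      then have "p i \<notin> set cs" using perm_in_support disj by blast
      then show ?thesis using cycle_comp_on_support [OF True] fb [of i] za False by simp
    next
      case False': False
      then show ?thesis
        using permutes_not_in [OF pI False'] permutes_not_in [OF cycle_permutes False] by simp
    qed
  qed
  then show ?thesis using za zb by (simp add: invariant_fns_def)
qed

lemma bij_betw_invariant_fns_cycle_comp:
  "bij_betw (\<lambda>n. (\<lambda>i. if i \<in> set cs then n i else 0, \<lambda>i. if i \<in> I then n i else 0))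
     (invariant_fns (set cs \<union> I) (c \<circ> p)) (invariant_fns (set cs) c \<times> invariant_fns I p)"
proof -
  have split: "(\<lambda>i. (if i \<in> set cs then n i else 0) + (if i \<in> I then n i else 0)) = n"
    if "n \<in> invariant_fns (set cs \<union> I) (c \<circ> p)" for n
    using that disj by (auto simp: invariant_fns_def fun_eq_iff)
  have join: "(\<lambda>i. if i \<in> set cs then a i + b i else 0) = a \<and> (\<lambda>i. if i \<in> I then a i + b i else 0) = b"
    if "a \<in> invariant_fns (set cs) c" "b \<in> invariant_fns I p" for a b
    using that disj by (auto simp: invariant_fns_def fun_eq_iff)
  show ?thesis
    by (rule bij_betw_byWitness [where f' = "\<lambda>x i. fst x i + snd x i"])
      (auto simp: split join intro: invariant_fns_restrict_cycle invariant_fns_restrict_support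
        invariant_fns_add)
qed

lemma count_fps_invariant_fns_cycle_comp:
  "count_fps (invariant_fns (set cs \<union> I) (c \<circ> p)) (fn_weight (set cs \<union> I))
    = count_fps (invariant_fns (set cs) c) (fn_weight (set cs)) * count_fps (invariant_fns I p) (fn_weight I)"
proof -
  let ?wt = "\<lambda>(a, b). fn_weight (set cs) a + fn_weight I b"
  have "fn_weight (set cs) (\<lambda>i. if i \<in> set cs then n i else 0) + fn_weight I (\<lambda>i. if i \<in> I then n i else 0)
      = fn_weight (set cs \<union> I) n" for n
    using disj finI by (simp add: fn_weight_def sum.union_disjoint)
  then have "count_fps (invariant_fns (set cs) c \<times> invariant_fns I p) ?wt
      = count_fps (invariant_fns (set cs \<union> I) (c \<circ> p)) (fn_weight (set cs \<union> I))"
    by (intro count_fps_bij_betw [OF bij_betw_invariant_fns_cycle_comp]) simp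
  moreover have "count_fps (invariant_fns (set cs) c \<times> invariant_fns I p) ?wt
      = count_fps (invariant_fns (set cs) c) (fn_weight (set cs)) * count_fps (invariant_fns I p) (fn_weight I)"
    by (rule count_fps_Times) (use finI in \<open>auto intro: finite_invariant_fns_weight\<close>)
  ultimately show ?thesis by simp
qed

end

lemma det_on_mult_count_fps_cycle_decomp:
  assumes "cycle_decomp S p"
  shows "det_on S (id_minus_X_perm p) * count_fps (invariant_fns S p) (fn_weight S) = 1"
  using assms
proof (induction rule: cycle_decomp.induct)
  case empty
  show ?case by (simp add: det_on_empty count_fps_invariant_fns_empty)
next
  case (comp I p cs)
  have pI: "p permutes I" and finI: "finite I" using cycle_decomp_permutes [OF comp.hyps(1)] by auto
  have disj: "set cs \<inter> I = {}" using comp.hyps by blast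
  note det = det_on_cycle_comp [OF pI finI comp.hyps(2) disj]
  note count = count_fps_invariant_fns_cycle_comp [OF pI finI comp.hyps(2) disj]
  show ?case
    unfolding det count
    using det_on_cycle_mult_count_fps [OF comp.hyps(2)] comp.IH by (simp add: algebra_simps)
qed

lemma det_id_minus_X_perm_mult_count_fps:
  fixes p :: "'a::finite \<Rightarrow> 'a"
  assumes "p permutes UNIV"
  shows "det_on UNIV (id_minus_X_perm p) * count_fps (invariant_fns UNIV p) (fn_weight UNIV) = 1"
  using assms by (intro det_on_mult_count_fps_cycle_decomp) (simp add: cycle_decomposition)

section \<open>Linear characters and orbits\<close>

lemma (in group) sum_character_subgroup:
  fixes \<theta> :: "'a \<Rightarrow> 'r::idom"
  assumes H: "subgroup H G"
    and mult: "\<And>g h. g \<in> H \<Longrightarrow> h \<in> H \<Longrightarrow> \<theta> (g \<otimes> h) = \<theta> g * \<theta> h"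
  shows "(\<Sum>h\<in>H. \<theta> h) = (if \<forall>h\<in>H. \<theta> h = 1 then of_nat (card H) else 0)"
proof (cases "\<forall>h\<in>H. \<theta> h = 1")
  case True
  then have "(\<Sum>h\<in>H. \<theta> h) = (\<Sum>h\<in>H. 1)" by (intro sum.cong) auto
  then show ?thesis using True by simp
next
  case False
  then obtain h where h: "h \<in> H" "\<theta> h \<noteq> 1" by blast
  have "bij_betw (\<lambda>s. h \<otimes> s) H H"
  proof (rule bij_betw_byWitness [where f' = "\<lambda>s. inv h \<otimes> s"])
    show "\<forall>s\<in>H. inv h \<otimes> (h \<otimes> s) = s" "\<forall>s\<in>H. h \<otimes> (inv h \<otimes> s) = s"
      using subgroup.mem_carrier [OF H] h(1) by (simp_all add: m_assoc [symmetric])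
    show "(\<lambda>s. h \<otimes> s) ` H \<subseteq> H" "(\<lambda>s. inv h \<otimes> s) ` H \<subseteq> H"
      using subgroup.m_closed [OF H] subgroup.m_inv_closed [OF H] h(1) by auto
  qed
  then have "(\<Sum>s\<in>H. \<theta> s) = (\<Sum>s\<in>H. \<theta> (h \<otimes> s))"
    by (rule sum.reindex_bij_betw [symmetric])
  also have "\<dots> = \<theta> h * (\<Sum>s\<in>H. \<theta> s)"
    using h(1) by (simp add: mult sum_distrib_left)
  finally have "(1 - \<theta> h) * (\<Sum>s\<in>H. \<theta> s) = 0"
    by (metis diff_self left_diff_distrib' mult_1)
  then show ?thesis using h(2) by (simp add: if_not_P [OF False])
qed

lemma group_action_restrict:
  assumes grp: "group G"
    and one: "\<And>x. f \<one>\<^bsub>G\<^esub> x = x"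
    and mult: "\<And>g h x. g \<in> carrier G \<Longrightarrow> h \<in> carrier G \<Longrightarrow> f (g \<otimes>\<^bsub>G\<^esub> h) x = f g (f h x)"
    and stable: "\<And>g x. g \<in> carrier G \<Longrightarrow> x \<in> X \<Longrightarrow> f g x \<in> X"
  shows "group_action G X (\<lambda>g. restrict (f g) X)"
proof -
  interpret group G by (rule grp)
  have inv: "f (inv\<^bsub>G\<^esub> g) (f g x) = x" if "g \<in> carrier G" for g x
    using that by (simp add: mult [symmetric] one)
  have Bij: "restrict (f g) X \<in> Bij X" if g: "g \<in> carrier G" for g
  proof -
    have ig: "inv\<^bsub>G\<^esub> g \<in> carrier G" using g by simp
    have "bij_betw (f g) X X"
    proof (rule bij_betw_byWitness [where f' = "f (inv\<^bsub>G\<^esub> g)"])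
      show "\<forall>x\<in>X. f (inv\<^bsub>G\<^esub> g) (f g x) = x" using inv [OF g] by blast
      show "\<forall>x\<in>X. f g (f (inv\<^bsub>G\<^esub> g) x) = x" using inv [OF ig] inv_inv [OF g] by simp
      show "f g ` X \<subseteq> X" by (rule image_subsetI) (rule stable [OF g])
      show "f (inv\<^bsub>G\<^esub> g) ` X \<subseteq> X" by (rule image_subsetI) (rule stable [OF ig])
    qed
    then show ?thesis by (simp add: Bij_def)
  qed
  show ?thesis
    unfolding group_action_def group_hom_def group_hom_axioms_def
  proof (intro conjI grp group_BijGroup homI)
    show "restrict (f g) X \<in> carrier (BijGroup X)" if "g \<in> carrier G" for g
      using Bij [OF that] by (simp add: BijGroup_def)
    show "restrict (f (g \<otimes>\<^bsub>G\<^esub> h)) X = restrict (f g) X \<otimes>\<^bsub>BijGroup X\<^esub> restrict (f h) X"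
      if "g \<in> carrier G" "h \<in> carrier G" for g h
      using that Bij stable by (auto simp: BijGroup_def compose_def mult)
  qed
qed

lemma (in group_action) character_stabilizer_trivial_orbit:
  assumes theta_mult: "\<And>g h. g \<in> carrier G \<Longrightarrow> h \<in> carrier G \<Longrightarrow> \<theta> (g \<otimes> h) = \<theta> g * \<theta> h"
    and theta_one: "\<theta> \<one> = (1 :: 'r::comm_ring_1)"
    and x: "x \<in> E" and y: "y \<in> orbit G \<phi> x"
    and triv: "\<forall>g\<in>stabilizer G \<phi> x. \<theta> g = 1"
  shows "\<forall>g\<in>stabilizer G \<phi> y. \<theta> g = 1"
proof
  interpret group G using group_hom group_hom.axioms(1) by auto
  obtain h where h: "h \<in> carrier G" "y = \<phi> h x" using y by (auto simp: orbit_def)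
  fix g assume g: "g \<in> stabilizer G \<phi> y"
  then have gG: "g \<in> carrier G" and gy: "\<phi> g y = y" by (auto simp: stabilizer_def)
  have yE: "y \<in> E" using element_image h x by blast
  have "\<phi> (inv h \<otimes> g \<otimes> h) x = x"
    using h x gG gy yE orbit_sym_aux [OF h(1) x] by (simp add: composition_rule)
  then have "inv h \<otimes> g \<otimes> h \<in> stabilizer G \<phi> x" using h gG by (simp add: stabilizer_def)
  then have "\<theta> (inv h \<otimes> g \<otimes> h) = 1" using triv by blast
  moreover have "\<theta> (inv h \<otimes> g \<otimes> h) = (\<theta> (inv h) * \<theta> h) * \<theta> g"
    using h gG by (simp add: theta_mult algebra_simps)
  moreover have "\<theta> (inv h) * \<theta> h = 1"
    using h theta_mult [of "inv h" h] by (simp add: theta_one)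
  ultimately show "\<theta> g = 1" by simp
qed

lemma (in group_action) character_stabilizer_trivial_orbit_iff:
  assumes theta_mult: "\<And>g h. g \<in> carrier G \<Longrightarrow> h \<in> carrier G \<Longrightarrow> \<theta> (g \<otimes> h) = \<theta> g * \<theta> h"
    and theta_one: "\<theta> \<one> = (1 :: 'r::comm_ring_1)"
    and x: "x \<in> E" and y: "y \<in> orbit G \<phi> x"
  shows "(\<forall>g\<in>stabilizer G \<phi> y. \<theta> g = 1) \<longleftrightarrow> (\<forall>g\<in>stabilizer G \<phi> x. \<theta> g = 1)"
proof -
  have yE: "y \<in> E" using x y element_image by (auto simp: orbit_def)
  show ?thesis
    using character_stabilizer_trivial_orbit [OF theta_mult theta_one x y]
      character_stabilizer_trivial_orbit [OF theta_mult theta_one yE orbit_sym [OF x yE y]]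
    by blast
qed

lemma (in group_action) sum_orbit_character_stabilizer:
  fixes \<theta> :: "'a \<Rightarrow> 'r::idom"
  assumes fin: "finite (carrier G)" and Orb: "Orb \<in> orbits G E \<phi>"
    and theta_mult: "\<And>g h. g \<in> carrier G \<Longrightarrow> h \<in> carrier G \<Longrightarrow> \<theta> (g \<otimes> h) = \<theta> g * \<theta> h"
    and theta_one: "\<theta> \<one> = 1"
  shows "(\<Sum>y\<in>Orb. if \<forall>g\<in>stabilizer G \<phi> y. \<theta> g = 1 then of_nat (card (stabilizer G \<phi> y)) else 0)
       = (if \<forall>y\<in>Orb. \<forall>g\<in>stabilizer G \<phi> y. \<theta> g = 1 then of_nat (order G) else (0 :: 'r))"
proof -
  let ?triv = "\<lambda>x. \<forall>g\<in>stabilizer G \<phi> x. \<theta> g = 1"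
  obtain x where x: "x \<in> E" "Orb = orbit G \<phi> x" using Orb by (auto simp: orbits_def)
  have const: "?triv y \<longleftrightarrow> ?triv x" if "y \<in> Orb" for y
    using character_stabilizer_trivial_orbit_iff [OF theta_mult theta_one x(1)] that x(2) by blast
  show ?thesis
  proof (cases "?triv x")
    case True
    then have "(\<Sum>y\<in>Orb. if ?triv y then of_nat (card (stabilizer G \<phi> y)) else 0)
        = (of_nat (\<Sum>y\<in>Orb. card (stabilizer G \<phi> y)) :: 'r)"
      using const by simp
    also have "\<dots> = of_nat (order G)" using card_stablizer_sum [OF fin Orb] by simp
    finally show ?thesis using True const by simp
  next
    case False
    then have none: "\<not> ?triv y" if "y \<in> Orb" for y
      using const [OF that] by blast
    have ntriv: "\<not> (\<forall>y\<in>Orb. ?triv y)"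
      using none orbit_refl [OF x(1)] x(2) by blast
    have "(\<Sum>y\<in>Orb. if ?triv y then of_nat (card (stabilizer G \<phi> y)) else 0) = (0::'r)"
      using none by (intro sum.neutral) auto
    then show ?thesis by (simp only: if_not_P [OF ntriv])
  qed
qed

theorem (in group_action) sum_character_invariants:
  fixes \<theta> :: "'a \<Rightarrow> 'r::idom"
  assumes fin: "finite (carrier G)" "finite E"
    and theta_mult: "\<And>g h. g \<in> carrier G \<Longrightarrow> h \<in> carrier G \<Longrightarrow> \<theta> (g \<otimes> h) = \<theta> g * \<theta> h"
    and theta_one: "\<theta> \<one> = 1"
  shows "(\<Sum>g\<in>carrier G. \<theta> g * of_nat (card (invariants E \<phi> g)))
       = of_nat (order G * card {Orb \<in> orbits G E \<phi>. \<forall>x\<in>Orb. \<forall>g\<in>stabilizer G \<phi> x. \<theta> g = 1})"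
proof -
  interpret group G using group_hom group_hom.axioms(1) by auto
  let ?triv = "\<lambda>x. \<forall>g\<in>stabilizer G \<phi> x. \<theta> g = 1"
  have "(\<Sum>g\<in>carrier G. \<theta> g * of_nat (card (invariants E \<phi> g)))
      = (\<Sum>g\<in>carrier G. \<Sum>x\<in>E. if \<phi> g x = x then \<theta> g else 0)"
    using fin(2) by (simp add: invariants_def sum.inter_filter [symmetric] mult.commute)
  also have "\<dots> = (\<Sum>x\<in>E. \<Sum>g\<in>stabilizer G \<phi> x. \<theta> g)"
    using fin(1) by (simp add: sum.swap [of _ "carrier G"] stabilizer_def sum.inter_filter)
  also have "\<dots> = (\<Sum>x\<in>E. if ?triv x then of_nat (card (stabilizer G \<phi> x)) else 0)"
    using fin(1) stabilizer_subset
    by (intro sum.cong refl sum_character_subgroup stabilizer_subgroup)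
      (auto intro: finite_subset theta_mult)
  also have "\<dots> = (\<Sum>Orb\<in>orbits G E \<phi>. \<Sum>x\<in>Orb. if ?triv x then of_nat (card (stabilizer G \<phi> x)) else 0)"
    by (rule disjoint_sum [OF fin(2), symmetric])
  also have "\<dots> = (\<Sum>Orb\<in>orbits G E \<phi>. if \<forall>x\<in>Orb. ?triv x then of_nat (order G) else 0)"
    by (rule sum.cong [OF refl], rule sum_orbit_character_stabilizer [OF fin(1) _ theta_mult theta_one])
  also have "\<dots> = of_nat (order G * card {Orb \<in> orbits G E \<phi>. \<forall>x\<in>Orb. ?triv x})"
    using fin(2) by (simp add: sum.If_cases Int_def orbits_def)
  finally show ?thesis .
qed

lemma act_orbits_eq_orbits: "act_orbits G f X = orbits G X (\<lambda>g. restrict (f g) X)"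
  by (auto simp: act_orbits_def act_orbit_def orbits_def orbit_def)

lemma stabilizer_restrict_eq_act_stabilizer:
  "x \<in> X \<Longrightarrow> stabilizer G (\<lambda>g. restrict (f g) X) x = act_stabilizer G f x"
  by (simp add: act_stabilizer_def stabilizer_def)

theorem char_inner_permutation_character:
  fixes \<theta> :: "'g \<Rightarrow> complex"
  assumes grp: "group G" and fin: "finite (carrier G)" "finite X"
    and one: "\<And>x. f \<one>\<^bsub>G\<^esub> x = x"
    and mult: "\<And>g h x. g \<in> carrier G \<Longrightarrow> h \<in> carrier G \<Longrightarrow> f (g \<otimes>\<^bsub>G\<^esub> h) x = f g (f h x)"
    and stable: "\<And>g x. g \<in> carrier G \<Longrightarrow> x \<in> X \<Longrightarrow> f g x \<in> X"
    and theta_mult: "\<And>g h. g \<in> carrier G \<Longrightarrow> h \<in> carrier G \<Longrightarrow> \<theta> (g \<otimes>\<^bsub>G\<^esub> h) = \<theta> g * \<theta> h"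
    and theta_one: "\<theta> \<one>\<^bsub>G\<^esub> = 1"
  shows "char_inner G (\<lambda>g. of_nat (card {x\<in>X. f g x = x})) \<theta>
    = of_nat (card {Orb \<in> act_orbits G f X. \<forall>x\<in>Orb. \<forall>g\<in>act_stabilizer G f x. \<theta> g = 1})"
proof -
  let ?\<phi> = "\<lambda>g. restrict (f g) X"
  interpret group G by (rule grp)
  interpret group_action G X ?\<phi> by (rule group_action_restrict [OF grp one mult stable])
  have "card (carrier G) \<noteq> 0" using fin(1) one_closed by (metis card_0_eq empty_iff)
  moreover have "(\<Sum>g\<in>carrier G. of_nat (card {x\<in>X. f g x = x}) * cnj (\<theta> g))
      = of_nat (order G * card {Orb \<in> orbits G X ?\<phi>. \<forall>x\<in>Orb. \<forall>g\<in>stabilizer G ?\<phi> x. cnj (\<theta> g) = 1})"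
  proof -
    have "invariants X ?\<phi> g = {x\<in>X. f g x = x}" for g
      by (auto simp: invariants_def)
    then show ?thesis
      using sum_character_invariants [OF fin, of "\<lambda>g. cnj (\<theta> g)"] theta_mult theta_one
      by (simp add: mult.commute)
  qed
  moreover have "{Orb \<in> orbits G X ?\<phi>. \<forall>x\<in>Orb. \<forall>g\<in>stabilizer G ?\<phi> x. cnj (\<theta> g) = 1}
      = {Orb \<in> act_orbits G f X. \<forall>x\<in>Orb. \<forall>g\<in>act_stabilizer G f x. \<theta> g = 1}"
  proof -
    have "x \<in> X" if "Orb \<in> orbits G X ?\<phi>" "x \<in> Orb" for Orb x
      using orbits_coverture that by blast
    then show ?thesis
      unfolding act_orbits_eq_orbits
      by (intro Collect_cong conj_cong refl ball_cong) (simp_all add: stabilizer_restrict_eq_act_stabilizer)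
  qed
  ultimately show ?thesis by (simp add: char_inner_def order_def)
qed

section \<open>The lattice \<open>M'\<close> inside \<open>M'\<^sub>\<real>\<close>\<close>

definition of_int_mat :: "int^'n^'m \<Rightarrow> real^'n^'m" where "of_int_mat M = (\<chi> i j. real_of_int (M $ i $ j))"
definition of_int_vec :: "int^'n \<Rightarrow> real^'n" where "of_int_vec v = (\<chi> i. real_of_int (v $ i))"

lemma realact_of_int: "realact A b g y = (of_int_mat (A g) *v fst y + snd y *\<^sub>R of_int_vec (b g), snd y)"
  by (simp add: realact_def of_int_mat_def of_int_vec_def)

lemma emb_of_int_vec: "emb v = (of_int_vec (fst v), real_of_int (snd v))"
  by (simp add: emb_def of_int_vec_def)

lemma of_int_mat_mult: "of_int_mat (M ** N) = of_int_mat M ** of_int_mat N"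
  by (simp add: of_int_mat_def matrix_matrix_mult_def vec_eq_iff of_int_sum)

lemma of_int_vec_mult: "of_int_vec (M *v v) = of_int_mat M *v of_int_vec v"
  by (simp add: of_int_mat_def of_int_vec_def matrix_vector_mult_def vec_eq_iff of_int_sum)

lemma of_int_vec_add: "of_int_vec (v + w) = of_int_vec v + of_int_vec w"
  by (simp add: of_int_vec_def vec_eq_iff)

lemma of_int_vec_inject: "of_int_vec v = of_int_vec w \<Longrightarrow> v = w"
  by (simp add: of_int_vec_def vec_eq_iff)

lemma of_int_mat_one: "of_int_mat (mat 1) = mat 1"
  by (simp add: of_int_mat_def mat_def vec_eq_iff)

lemma of_int_vec_zero: "of_int_vec 0 = 0"
  by (simp add: of_int_vec_def vec_eq_iff)

lemma emb_inject: "emb v = emb w \<Longrightarrow> v = w"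
  by (simp add: emb_of_int_vec prod_eq_iff of_int_vec_inject)

lemma emb_add: "emb (v + w) = emb v + emb w"
  by (simp add: emb_of_int_vec of_int_vec_add)

lemma emb_diff: "emb (v - w) = emb v - emb w"
  by (simp add: emb_def vec_eq_iff)

lemma emb_zero: "emb 0 = 0"
  by (simp add: emb_def vec_eq_iff zero_prod_def)

definition int_scale :: "int \<Rightarrow> (int^'d) \<times> int \<Rightarrow> (int^'d) \<times> int" where
  "int_scale c v = (c *s fst v, c * snd v)"

lemma emb_int_scale: "emb (int_scale c v) = real_of_int c *\<^sub>R emb v"
  by (simp add: emb_def int_scale_def vec_eq_iff)

lemma emb_sum: "finite S \<Longrightarrow> emb (sum f S) = (\<Sum>x\<in>S. emb (f x))"
  by (induction S rule: finite_induct) (simp_all add: emb_zero emb_add)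

lemma latact_comp_coeffs:
  assumes h: "\<And>v. latact A b g (latact A b h v) = latact A b k v"
  shows "A g ** A h = A k" "A g *v b h + b g = b k"
proof -
  have "A g *v (A h *v x) = A k *v x" for x
    using h[of "(x, 0)"] by (simp add: latact_def)
  then show "A g ** A h = A k" by (simp add: matrix_eq matrix_vector_mul_assoc)
  show "A g *v b h + b g = b k"
    using h[of "(0, 1)"] by (simp add: latact_def)
qed

lemma realact_comp:
  assumes h: "\<And>v. latact A b g (latact A b h v) = latact A b k v"
  shows "realact A b g (realact A b h y) = realact A b k y"
proof -
  note m = latact_comp_coeffs[OF h]
  have "of_int_mat (A k) = of_int_mat (A g) ** of_int_mat (A h)" using m(1) by (simp add: of_int_mat_mult[symmetric])
  moreover have "of_int_vec (b k) = of_int_mat (A g) *v of_int_vec (b h) + of_int_vec (b g)" using m(2)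
    by (metis of_int_vec_add of_int_vec_mult)
  ultimately show ?thesis
    by (simp add: realact_of_int matrix_vector_mul_assoc algebra_simps)
qed

lemma realact_id:
  assumes h: "\<And>v. latact A b g v = v"
  shows "realact A b g y = y"
proof -
  have "A g *v x = x" for x using h[of "(x, 0)"] by (simp add: latact_def)
  then have "A g = mat 1" by (simp add: matrix_eq)
  moreover have "b g = 0" using h[of "(0, 1)"] by (simp add: latact_def)
  ultimately show ?thesis by (simp add: realact_of_int of_int_mat_one of_int_vec_zero)
qed

lemma of_int_vec_scale: "of_int_vec (c *s v) = real_of_int c *\<^sub>R of_int_vec v"
  by (simp add: of_int_vec_def vec_eq_iff)

lemma realact_emb: "realact A b g (emb v) = emb (latact A b g v)"
  by (simp add: realact_of_int emb_of_int_vec latact_def of_int_vec_add of_int_vec_mult of_int_vec_scale)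

lemma realact_linear: "linear (realact A b g)"
proof (rule linearI)
  fix x y show "realact A b g (x + y) = realact A b g x + realact A b g y"
    by (simp add: realact_of_int algebra_simps)
next
  fix c x show "realact A b g (c *\<^sub>R x) = c *\<^sub>R realact A b g x"
    by (simp add: realact_of_int algebra_simps)
qed

lemma finite_bounded_lattice_points: "finite {v :: (int^'d) \<times> int. (\<forall>i. \<bar>fst v $ i\<bar> \<le> M) \<and> \<bar>snd v\<bar> \<le> M}"
proof (rule finite_subset)
  show "{v :: (int^'d) \<times> int. (\<forall>i. \<bar>fst v $ i\<bar> \<le> M) \<and> \<bar>snd v\<bar> \<le> M}
      \<subseteq> (\<lambda>(f, t). (vec_lambda f, t)) ` ((PiE UNIV (\<lambda>_. {-M..M})) \<times> {-M..M})"
  proof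
    fix v :: "(int^'d) \<times> int" assume v: "v \<in> {v. (\<forall>i. \<bar>fst v $ i\<bar> \<le> M) \<and> \<bar>snd v\<bar> \<le> M}"
    have "v = (\<lambda>(f, t). (vec_lambda f, t)) (vec_nth (fst v), snd v)" by simp
    moreover have "(vec_nth (fst v), snd v) \<in> (PiE UNIV (\<lambda>_. {-M..M})) \<times> {-M..M}"
    proof -
      have "fst v $ i \<in> {-M..M}" for i
      proof -
        have "\<bar>fst v $ i\<bar> \<le> M" using v by blast
        then show ?thesis by (auto simp: abs_le_iff)
      qed
      moreover have "snd v \<in> {-M..M}"
      proof -
        have "\<bar>snd v\<bar> \<le> M" using v by blast
        then show ?thesis by (auto simp: abs_le_iff)
      qed
      ultimately show ?thesis by (simp add: PiE_iff)
    qed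
    ultimately show "v \<in> (\<lambda>(f, t). (vec_lambda f, t)) ` ((PiE UNIV (\<lambda>_. {-M..M})) \<times> {-M..M})"
      by blast
  qed
  show "finite ((\<lambda>(f, t). (vec_lambda f, t)) ` ((PiE UNIV (\<lambda>_. {-M..M})) \<times> {-M..M}))"
    by (intro finite_imageI finite_cartesian_product finite_PiE) auto
qed

lemma nat_eq_if_frac_add_eq:
  fixes a a' :: real and n n' :: nat
  assumes "0 \<le> a" "a < 1" "0 \<le> a'" "a' < 1" "a + real n = a' + real n'"
  shows "n = n'"
proof -
  have "real n < real (Suc n')" using assms by simp
  then have "n < Suc n'" by (simp only: of_nat_less_iff)
  moreover have "real n' < real (Suc n)" using assms by simp
  then have "n' < Suc n" by (simp only: of_nat_less_iff)
  ultimately show ?thesis by simp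
qed

section \<open>The simplex and its barycentric coordinates\<close>

locale lattice_simplex_action =
  fixes G :: "('g, 'c) monoid_scheme"
    and A :: "'g \<Rightarrow> int^'d^'d" and b :: "'g \<Rightarrow> int^'d"
    and vs :: "nat \<Rightarrow> (int^'d) \<times> int"
    and P :: "((real^'d) \<times> real) set"
  assumes grp: "group G" and fin: "finite (carrier G)"
    and act_one: "\<And>v. latact A b \<one>\<^bsub>G\<^esub> v = v"
    and act_mult: "\<And>g h v. g \<in> carrier G \<Longrightarrow> h \<in> carrier G \<Longrightarrow>
                     latact A b (g \<otimes>\<^bsub>G\<^esub> h) v = latact A b g (latact A b h v)"
    and vs_height: "\<And>i. i \<le> CARD('d) \<Longrightarrow> snd (vs i) = 1"
    and vs_inj: "inj_on vs {0..CARD('d)}"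
    and vs_indep: "\<not> affine_dependent (emb ` vs ` {0..CARD('d)})"
    and P_def: "P = convex hull (emb ` vs ` {0..CARD('d)})"
    and P_inv: "\<And>g. g \<in> carrier G \<Longrightarrow> realact A b g ` P = P"
begin

text \<open>The \<open>d + 1\<close> vertices are indexed by \<open>'d option\<close>, the index type of the coordinates
  \<open>(x, h) \<mapsto> (h, x)\<close> of \<open>M'\<^sub>\<real>\<close> used for matrices below.\<close>

definition vertex_index :: "'d option \<Rightarrow> nat" where
  "vertex_index = (SOME e. bij_betw e UNIV {0..CARD('d)})"

lemma bij_vertex_index: "bij_betw vertex_index UNIV {0..CARD('d)}"
proof -
  have "\<exists>e::'d option \<Rightarrow> nat. bij_betw e UNIV {0..CARD('d)}"
    by (rule finite_same_card_bij) (simp_all add: UNIV_option_conv card_image)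
  then show ?thesis unfolding vertex_index_def by (rule someI_ex)
qed

lemma vertex_index_le: "vertex_index k \<in> {0..CARD('d)}"
  using bij_vertex_index by (auto simp: bij_betw_def)

definition vertex :: "'d option \<Rightarrow> (real^'d) \<times> real" where
  "vertex k = emb (vs (vertex_index k))"

lemma inj_vertex: "inj vertex"
proof (rule injI)
  fix k k' assume "vertex k = vertex k'"
  then have "vs (vertex_index k) = vs (vertex_index k')" unfolding vertex_def by (rule emb_inject)
  then have "vertex_index k = vertex_index k'" using vs_inj vertex_index_le by (meson inj_onD)
  then show "k = k'" using bij_vertex_index by (auto simp: bij_betw_def inj_on_def)
qed

lemma range_vertex: "vertex ` UNIV = emb ` vs ` {0..CARD('d)}"
proof -
  have "vertex_index ` UNIV = {0..CARD('d)}" using bij_vertex_index by (simp add: bij_betw_def)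
  then show ?thesis unfolding vertex_def by (metis image_image)
qed

lemma snd_vertex: "snd (vertex k) = 1"
  using vs_height[of "vertex_index k"] vertex_index_le[of k] by (simp add: vertex_def emb_def)

definition bary :: "('d option \<Rightarrow> real) \<Rightarrow> (real^'d) \<times> real" where
  "bary c = (\<Sum>k\<in>UNIV. c k *\<^sub>R vertex k)"

lemma snd_bary: "snd (bary c) = sum c UNIV"
  by (simp add: bary_def snd_sum snd_vertex)

lemma bary_add: "bary (\<lambda>k. c k + d k) = bary c + bary d"
  by (simp add: bary_def scaleR_add_left sum.distrib)

lemma bary_diff: "bary (\<lambda>k. c k - d k) = bary c - bary d"
  by (simp add: bary_def scaleR_diff_left sum_subtractf)

lemma bary_scale: "bary (\<lambda>k. r * c k) = r *\<^sub>R bary c"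
  by (simp add: bary_def scaleR_sum_right)

lemma sum_range_vertex: "sum f (vertex ` UNIV) = (\<Sum>k\<in>UNIV. f (vertex k))"
  using sum.reindex[OF inj_vertex, of f] by simp

lemma bary_eq_0D:
  assumes "bary c = 0" shows "c k = 0"
proof (rule ccontr)
  assume nz: "c k \<noteq> 0"
  let ?T = "vertex ` UNIV"
  define U where "U = (\<lambda>v. c (Hilbert_Choice.inv vertex v))"
  have U: "U (vertex j) = c j" for j by (simp add: U_def inv_f_f[OF inj_vertex])
  have "sum U ?T = 0"
    using assms snd_bary[of c] by (simp add: sum_range_vertex U)
  moreover have "sum (\<lambda>v. U v *\<^sub>R v) ?T = 0"
    using assms by (simp add: sum_range_vertex U bary_def)
  moreover have "\<exists>v\<in>?T. U v \<noteq> 0" by (intro bexI[of _ "vertex k"]) (simp_all add: U nz)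
  ultimately have "affine_dependent ?T"
    by (subst affine_dependent_explicit_finite) auto
  then show False using vs_indep by (simp add: range_vertex)
qed

lemma bary_inject:
  assumes "bary c = bary d" shows "c = d"
proof
  fix k
  have "bary (\<lambda>k. c k - d k) = 0" using assms by (simp add: bary_diff)
  then show "c k = d k" using bary_eq_0D by fastforce
qed

lemma P_eq_bary: "P = {y. \<exists>c. (\<forall>k. 0 \<le> c k) \<and> sum c UNIV = 1 \<and> y = bary c}"
proof -
  have "P = convex hull (vertex ` UNIV)" by (simp add: P_def range_vertex)
  also have "\<dots> = {y. \<exists>u. (\<forall>x\<in>vertex ` UNIV. 0 \<le> u x) \<and> sum u (vertex ` UNIV) = 1 \<and> sum (\<lambda>x. u x *\<^sub>R x) (vertex ` UNIV) = y}"
    by (rule convex_hull_finite) simp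
  also have "\<dots> = {y. \<exists>c. (\<forall>k. 0 \<le> c k) \<and> sum c UNIV = 1 \<and> y = bary c}"
  proof (intro Collect_cong iffI)
    fix y assume "\<exists>u. (\<forall>x\<in>vertex ` UNIV. 0 \<le> u x) \<and> sum u (vertex ` UNIV) = 1 \<and> sum (\<lambda>x. u x *\<^sub>R x) (vertex ` UNIV) = y"
    then obtain u where u: "\<forall>x\<in>vertex ` UNIV. 0 \<le> u x" "sum u (vertex ` UNIV) = 1" "sum (\<lambda>x. u x *\<^sub>R x) (vertex ` UNIV) = y"
      by blast
    show "\<exists>c. (\<forall>k. 0 \<le> c k) \<and> sum c UNIV = 1 \<and> y = bary c"
      by (rule exI[of _ "\<lambda>k. u (vertex k)"]) (use u in \<open>auto simp: sum_range_vertex bary_def\<close>)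
  next
    fix y assume "\<exists>c. (\<forall>k. 0 \<le> c k) \<and> sum c UNIV = 1 \<and> y = bary c"
    then obtain c where c: "\<forall>k. 0 \<le> c k" "sum c UNIV = 1" "y = bary c" by blast
    have U: "c (Hilbert_Choice.inv vertex (vertex j)) = c j" for j by (simp add: inv_f_f[OF inj_vertex])
    show "\<exists>u. (\<forall>x\<in>vertex ` UNIV. 0 \<le> u x) \<and> sum u (vertex ` UNIV) = 1 \<and> sum (\<lambda>x. u x *\<^sub>R x) (vertex ` UNIV) = y"
      by (rule exI[of _ "\<lambda>v. c (Hilbert_Choice.inv vertex v)"]) (use c in \<open>auto simp: sum_range_vertex bary_def U\<close>)
  qed
  finally show ?thesis .
qed

lemma vertex_in_P: "vertex k \<in> P"
proof -
  have e: "(\<lambda>j. (if j = k then 1 else 0) *\<^sub>R vertex j) = (\<lambda>j. if j = k then vertex j else 0)" by auto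
  have "vertex k = bary (\<lambda>j. if j = k then 1 else 0)"
    unfolding bary_def e by simp
  then show ?thesis unfolding P_eq_bary by (intro CollectI exI[of _ "\<lambda>j. if j = k then 1 else 0"]) auto
qed

lemma dilate_P_eq_bary: "(\<lambda>y. real m *\<^sub>R y) ` P = {y. \<exists>c. (\<forall>k. 0 \<le> c k) \<and> sum c UNIV = real m \<and> y = bary c}"
proof
  show "(\<lambda>y. real m *\<^sub>R y) ` P \<subseteq> {y. \<exists>c. (\<forall>k. 0 \<le> c k) \<and> sum c UNIV = real m \<and> y = bary c}"
  proof
    fix y assume "y \<in> (\<lambda>y. real m *\<^sub>R y) ` P"
    then obtain c where c: "\<forall>k. 0 \<le> c k" "sum c UNIV = 1" "y = real m *\<^sub>R bary c"
      unfolding P_eq_bary by blast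
    show "y \<in> {y. \<exists>c. (\<forall>k. 0 \<le> c k) \<and> sum c UNIV = real m \<and> y = bary c}"
      using c by (intro CollectI exI[of _ "\<lambda>k. real m * c k"])
        (simp add: bary_scale sum_distrib_left[symmetric])
  qed
  show "{y. \<exists>c. (\<forall>k. 0 \<le> c k) \<and> sum c UNIV = real m \<and> y = bary c} \<subseteq> (\<lambda>y. real m *\<^sub>R y) ` P"
  proof
    fix y assume "y \<in> {y. \<exists>c. (\<forall>k. 0 \<le> c k) \<and> sum c UNIV = real m \<and> y = bary c}"
    then obtain c where c: "\<forall>k. 0 \<le> c k" "sum c UNIV = real m" "y = bary c" by blast
    show "y \<in> (\<lambda>y. real m *\<^sub>R y) ` P"
    proof (cases "m = 0")
      case True
      then have "\<forall>k. c k = 0" using c sum_nonneg_eq_0_iff[of UNIV c] by simp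
      then have "y = 0" using c by (simp add: bary_def)
      then show ?thesis using True vertex_in_P by (intro image_eqI[of _ _ "vertex None"]) auto
    next
      case False
      have "y = real m *\<^sub>R bary (\<lambda>k. c k / real m)"
        using False c by (simp add: bary_scale[symmetric])
      moreover have "bary (\<lambda>k. c k / real m) \<in> P"
        unfolding P_eq_bary using c False by (intro CollectI exI[of _ "\<lambda>k. c k / real m"])
          (simp add: sum_divide_distrib[symmetric])
      ultimately show ?thesis by blast
    qed
  qed
qed

lemma latpts_iff_bary: "v \<in> latpts m P \<longleftrightarrow> (\<exists>c. (\<forall>k. 0 \<le> c k) \<and> sum c UNIV = real m \<and> emb v = bary c)"
  by (simp add: latpts_def dilate_P_eq_bary)

lemma BOX_iff_bary: "v \<in> BOX CARD('d) vs \<longleftrightarrow> (\<exists>a. (\<forall>k. 0 \<le> a k \<and> a k < 1) \<and> emb v = bary a)"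
proof -
  have bij: "bij_betw vertex_index UNIV {..CARD('d)}" using bij_vertex_index by (simp add: atLeast0AtMost)
  have re: "(\<Sum>i\<le>CARD('d). f i) = (\<Sum>k\<in>UNIV. f (vertex_index k))" for f :: "nat \<Rightarrow> (real^'d) \<times> real"
    using sum.reindex_bij_betw[OF bij, of f] by simp
  have ei: "inv_into UNIV vertex_index (vertex_index k) = k" for k
    using bij by (simp add: bij_betw_inv_into_left)
  show ?thesis
  proof
    assume "v \<in> BOX CARD('d) vs"
    then obtain a where a: "\<forall>i\<le>CARD('d). 0 \<le> a i \<and> a i < 1" "emb v = (\<Sum>i\<le>CARD('d). a i *\<^sub>R emb (vs i))"
      unfolding BOX_def by blast
    have "emb v = bary (\<lambda>k. a (vertex_index k))" unfolding a(2) re bary_def vertex_def ..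
    moreover have "\<forall>k. 0 \<le> a (vertex_index k) \<and> a (vertex_index k) < 1" using a(1) vertex_index_le by simp
    ultimately show "\<exists>a. (\<forall>k. 0 \<le> a k \<and> a k < 1) \<and> emb v = bary a"
      by (intro exI[of _ "\<lambda>k. a (vertex_index k)"] conjI)
  next
    assume "\<exists>a. (\<forall>k. 0 \<le> a k \<and> a k < 1) \<and> emb v = bary a"
    then obtain a where a: "\<forall>k. 0 \<le> a k \<and> a k < 1" "emb v = bary a" by blast
    define a' where "a' = (\<lambda>i. a (inv_into UNIV vertex_index i))"
    have "(\<Sum>i\<le>CARD('d). a' i *\<^sub>R emb (vs i)) = bary a"
      unfolding re bary_def vertex_def a'_def ei ..
    moreover have "\<forall>i\<le>CARD('d). 0 \<le> a' i \<and> a' i < 1" using a(1) by (simp add: a'_def)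
    ultimately show "v \<in> BOX CARD('d) vs" using a(2) unfolding BOX_def mem_Collect_eq
      by (intro exI[of _ a'] conjI) auto
  qed
qed

lemma finite_bary_bounded: "finite {v. \<exists>c. (\<forall>k. 0 \<le> c k \<and> c k \<le> r) \<and> emb v = bary c}"
proof -
  define R where "R = r * (\<Sum>k\<in>UNIV. norm (vertex k))"
  have nb: "norm (emb v) \<le> R" if "\<forall>k. 0 \<le> c k \<and> c k \<le> r" "emb v = bary c" for v c
  proof -
    have "norm (bary c) \<le> (\<Sum>k\<in>UNIV. norm (c k *\<^sub>R vertex k))" unfolding bary_def by (rule norm_sum)
    also have "\<dots> \<le> (\<Sum>k\<in>UNIV. r * norm (vertex k))"
      using that(1) by (intro sum_mono) (simp add: mult_right_mono)
    finally show ?thesis using that(2) by (simp add: R_def sum_distrib_left)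
  qed
  have "{v. \<exists>c. (\<forall>k. 0 \<le> c k \<and> c k \<le> r) \<and> emb v = bary c}
      \<subseteq> {v :: (int^'d) \<times> int. (\<forall>i. \<bar>fst v $ i\<bar> \<le> ceiling R) \<and> \<bar>snd v\<bar> \<le> ceiling R}"
  proof
    fix v assume "v \<in> {v. \<exists>c. (\<forall>k. 0 \<le> c k \<and> c k \<le> r) \<and> emb v = bary c}"
    then have n: "norm (emb v) \<le> R" using nb by blast
    have "\<bar>real_of_int (fst v $ i)\<bar> \<le> R" for i
    proof -
      have "\<bar>real_of_int (fst v $ i)\<bar> = \<bar>fst (emb v) $ i\<bar>" by (simp add: emb_def)
      also have "\<dots> \<le> norm (fst (emb v))" by (rule component_le_norm_cart)
      also have "\<dots> \<le> norm (emb v)" by (metis norm_fst_le prod.collapse)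
      finally show ?thesis using n by simp
    qed
    moreover have "\<bar>real_of_int (snd v)\<bar> \<le> R"
    proof -
      have "\<bar>real_of_int (snd v)\<bar> = norm (snd (emb v))" by (simp add: emb_def)
      also have "\<dots> \<le> norm (emb v)" by (metis norm_snd_le prod.collapse)
      finally show ?thesis using n by simp
    qed
    moreover have ce: "\<bar>z\<bar> \<le> ceiling R" if "\<bar>real_of_int z\<bar> \<le> R" for z
      by (metis ceiling_mono ceiling_of_int of_int_abs that)
    ultimately show "v \<in> {v :: (int^'d) \<times> int. (\<forall>i. \<bar>fst v $ i\<bar> \<le> ceiling R) \<and> \<bar>snd v\<bar> \<le> ceiling R}"
      by blast
  qed
  then show ?thesis using finite_bounded_lattice_points finite_subset by blast
qed

lemma BOX_finite: "finite (BOX CARD('d) vs)"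
proof (rule finite_subset[OF _ finite_bary_bounded[of 1]])
  show "BOX CARD('d) vs \<subseteq> {v. \<exists>c. (\<forall>k. 0 \<le> c k \<and> c k \<le> 1) \<and> emb v = bary c}"
  proof
    fix v assume "v \<in> BOX CARD('d) vs"
    then obtain a where a: "\<forall>k. 0 \<le> a k \<and> a k < 1" "emb v = bary a" by (auto simp: BOX_iff_bary)
    then have "\<forall>k. 0 \<le> a k \<and> a k \<le> 1" by (simp add: less_imp_le)
    then show "v \<in> {v. \<exists>c. (\<forall>k. 0 \<le> c k \<and> c k \<le> 1) \<and> emb v = bary c}" using a(2) by blast
  qed
qed

end


context lattice_simplex_action begin

lemma realact_inv:
  assumes g: "g \<in> carrier G"
  shows "realact A b (inv\<^bsub>G\<^esub> g) (realact A b g y) = y"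
proof -
  have ig: "inv\<^bsub>G\<^esub> g \<in> carrier G" using g by (rule group.inv_closed[OF grp])
  have "latact A b (inv\<^bsub>G\<^esub> g) (latact A b g v) = latact A b \<one>\<^bsub>G\<^esub> v" for v
    using act_mult[OF ig g, of v] group.l_inv[OF grp g] by simp
  then have "realact A b (inv\<^bsub>G\<^esub> g) (realact A b g y) = realact A b \<one>\<^bsub>G\<^esub> y"
    by (rule realact_comp)
  also have "\<dots> = y" by (rule realact_id[OF act_one])
  finally show ?thesis .
qed

lemma realact_inj: "g \<in> carrier G \<Longrightarrow> inj (realact A b g)"
  by (metis injI realact_inv)

lemma extreme_point_of_P_iff: "x extreme_point_of P \<longleftrightarrow> x \<in> range vertex"
  using extreme_point_of_convex_hull_affine_independent[OF vs_indep] by (simp add: P_def range_vertex)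

lemma realact_extreme_point_of_P:
  assumes g: "g \<in> carrier G" and x: "x extreme_point_of P"
  shows "realact A b g x extreme_point_of P"
proof -
  let ?f = "realact A b g"
  have lin: "linear ?f" by (rule realact_linear)
  have inj: "inj ?f" using g by (rule realact_inj)
  have fP: "?f ` P = P" using g by (rule P_inv)
  have xP: "x \<in> P" using x by (simp add: extreme_point_of_def)
  show ?thesis unfolding extreme_point_of_def
  proof (intro conjI ballI)
    show "?f x \<in> P" using xP fP by blast
    fix a' b' assume a': "a' \<in> P" and b': "b' \<in> P"
    obtain a where a: "a \<in> P" "a' = ?f a" using a' fP by (metis imageE)
    obtain c where c: "c \<in> P" "b' = ?f c" using b' fP by (metis imageE)
    show "?f x \<notin> open_segment a' b'"
    proof
      assume "?f x \<in> open_segment a' b'"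
      then have "?f x \<in> ?f ` open_segment a c" using a c open_segment_linear_image[OF lin inj] by simp
      then obtain z where z: "z \<in> open_segment a c" "?f x = ?f z" by blast
      then have "x = z" using inj by (simp add: inj_eq)
      then show False using x z a c by (simp add: extreme_point_of_def)
    qed
  qed
qed

definition vperm :: "'g \<Rightarrow> 'd option \<Rightarrow> 'd option" where
  "vperm g k = (THE j. vertex j = realact A b g (vertex k))"

lemma vertex_vperm:
  assumes g: "g \<in> carrier G" shows "vertex (vperm g k) = realact A b g (vertex k)"
proof -
  have "vertex k extreme_point_of P" by (simp add: extreme_point_of_P_iff)
  then have "realact A b g (vertex k) extreme_point_of P" by (rule realact_extreme_point_of_P[OF g])
  then obtain j where j: "realact A b g (vertex k) = vertex j" by (auto simp: extreme_point_of_P_iff)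
  have "\<exists>!j. vertex j = realact A b g (vertex k)"
    using j inj_vertex by (metis injD)
  then show ?thesis unfolding vperm_def by (rule theI')
qed

lemma vperm_permutes:
  assumes g: "g \<in> carrier G" shows "vperm g permutes UNIV"
proof (rule inj_imp_permutes)
  show "inj_on (vperm g) UNIV"
  proof (rule inj_onI)
    fix x y assume "vperm g x = vperm g y"
    then have "realact A b g (vertex x) = realact A b g (vertex y)" using vertex_vperm[OF g] by metis
    then have "vertex x = vertex y" using realact_inj[OF g] by (simp add: inj_eq)
    then show "x = y" using inj_vertex by (simp add: inj_eq)
  qed
qed auto

lemma realact_bary:
  assumes g: "g \<in> carrier G"
  shows "realact A b g (bary c) = bary (\<lambda>k. c (Hilbert_Choice.inv (vperm g) k))"
proof -
  have bs: "bij (vperm g)" using vperm_permutes[OF g] by (simp add: permutes_bij)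
  have "realact A b g (bary c) = (\<Sum>k\<in>UNIV. c k *\<^sub>R realact A b g (vertex k))"
    unfolding bary_def using realact_linear[of A b g]
    by (simp add: linear_sum linear_scale)
  also have "\<dots> = (\<Sum>k\<in>UNIV. c k *\<^sub>R vertex (vperm g k))" by (simp add: vertex_vperm[OF g])
  also have "\<dots> = (\<Sum>k\<in>UNIV. (\<lambda>j. c (Hilbert_Choice.inv (vperm g) j) *\<^sub>R vertex j) (vperm g k))"
    using bs by (simp add: bij_is_inj inv_f_f)
  also have "\<dots> = (\<Sum>j\<in>UNIV. c (Hilbert_Choice.inv (vperm g) j) *\<^sub>R vertex j)"
    by (rule sum.reindex_bij_betw[OF bs])
  finally show ?thesis by (simp add: bary_def)
qed

lemma realact_bary_fixed_iff:
  assumes g: "g \<in> carrier G"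
  shows "realact A b g (bary c) = bary c \<longleftrightarrow> (\<forall>k. c (vperm g k) = c k)"
proof -
  have bs: "bij (vperm g)" using vperm_permutes[OF g] by (simp add: permutes_bij)
  have "realact A b g (bary c) = bary c \<longleftrightarrow> (\<lambda>k. c (Hilbert_Choice.inv (vperm g) k)) = c"
    using bary_inject by (auto simp: realact_bary[OF g])
  also have "\<dots> \<longleftrightarrow> (\<forall>k. c (vperm g k) = c k)"
  proof
    assume h: "(\<lambda>k. c (Hilbert_Choice.inv (vperm g) k)) = c"
    show "\<forall>k. c (vperm g k) = c k"
    proof
      fix k
      have "c (Hilbert_Choice.inv (vperm g) (vperm g k)) = c (vperm g k)" using h by metis
      then show "c (vperm g k) = c k" using bs by (simp add: bij_is_inj inv_f_f)
    qed
  next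
    assume h: "\<forall>k. c (vperm g k) = c k"
    show "(\<lambda>k. c (Hilbert_Choice.inv (vperm g) k)) = c"
    proof
      fix k
      have "c (vperm g (Hilbert_Choice.inv (vperm g) k)) = c (Hilbert_Choice.inv (vperm g) k)" using h by blast
      then show "c (Hilbert_Choice.inv (vperm g) k) = c k" using bs by (simp add: bij_is_surj surj_f_inv_f)
    qed
  qed
  finally show ?thesis .
qed

lemma latact_fixed_iff: "latact A b g v = v \<longleftrightarrow> realact A b g (emb v) = emb v"
  by (metis emb_inject realact_emb)

definition fixed_latpts :: "nat \<Rightarrow> 'g \<Rightarrow> ((int^'d) \<times> int) set" where
  "fixed_latpts m g = {v \<in> latpts m P. latact A b g v = v}"

definition fixed_box :: "'g \<Rightarrow> ((int^'d) \<times> int) set" where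
  "fixed_box g = {w \<in> BOX CARD('d) vs. latact A b g w = w}"

definition add_vertex_multiples :: "((int^'d) \<times> int) \<times> ('d option \<Rightarrow> nat) \<Rightarrow> (int^'d) \<times> int" where
  "add_vertex_multiples x = fst x + (\<Sum>k\<in>UNIV. int_scale (int (snd x k)) (vs (vertex_index k)))"

lemma emb_vertex_sum: "emb (\<Sum>k\<in>UNIV. int_scale (int (nn k)) (vs (vertex_index k))) = bary (\<lambda>k. real (nn k))"
  by (simp add: emb_sum emb_int_scale bary_def vertex_def)

lemma emb_add_vertex_multiples: "emb (add_vertex_multiples (w, nn)) = emb w + bary (\<lambda>k. real (nn k))"
  by (simp add: add_vertex_multiples_def emb_add emb_vertex_sum)

lemma BOX_height:
  assumes "\<forall>k. 0 \<le> a k \<and> a k < 1" "emb w = bary a"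
  shows "real_of_int (snd w) = sum a UNIV" "snd w \<ge> 0"
proof -
  have "real_of_int (snd w) = snd (emb w)" by (simp add: emb_def)
  also have "\<dots> = sum a UNIV" using assms(2) by (simp add: snd_bary)
  finally show "real_of_int (snd w) = sum a UNIV" .
  moreover have "sum a UNIV \<ge> 0" using assms(1) by (simp add: sum_nonneg)
  ultimately show "snd w \<ge> 0" by simp
qed

lemma inj_on_add_vertex_multiples: "inj_on add_vertex_multiples (BOX CARD('d) vs \<times> UNIV)"
proof (rule inj_onI, clarify)
  fix w nn w' nn'
  assume w: "w \<in> BOX CARD('d) vs" and w': "w' \<in> BOX CARD('d) vs"
    and e: "add_vertex_multiples (w, nn) = add_vertex_multiples (w', nn')"
  obtain a where a: "\<forall>k. 0 \<le> a k \<and> a k < 1" "emb w = bary a"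
    using w by (auto simp: BOX_iff_bary)
  obtain a' where a': "\<forall>k. 0 \<le> a' k \<and> a' k < 1" "emb w' = bary a'"
    using w' by (auto simp: BOX_iff_bary)
  have emb_eq: "emb w + bary (\<lambda>k. real (nn k)) = emb w' + bary (\<lambda>k. real (nn' k))"
    using arg_cong [OF e, of emb] by (simp add: emb_add_vertex_multiples)
  then have "(\<lambda>k. a k + real (nn k)) = (\<lambda>k. a' k + real (nn' k))"
    by (intro bary_inject) (simp add: a a' bary_add)
  then have "nn = nn'"
    using a(1) a'(1) nat_eq_if_frac_add_eq by (metis ext)
  moreover have "w = w'"
    using emb_eq \<open>nn = nn'\<close> by (simp add: emb_inject)
  ultimately show "w = w' \<and> nn = nn'" by simp
qed

lemma add_vertex_multiples_in_fixed_latpts: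
  assumes g: "g \<in> carrier G" and w: "w \<in> fixed_box g" and nn: "nn \<in> invariant_fns UNIV (vperm g)"
    and lev: "nat (snd w) + sum nn UNIV = m"
  shows "add_vertex_multiples (w, nn) \<in> fixed_latpts m g"
proof -
  obtain a where a: "\<forall>k. 0 \<le> a k \<and> a k < 1" "emb w = bary a"
    using w by (auto simp: fixed_box_def BOX_iff_bary)
  have af: "\<forall>k. a (vperm g k) = a k"
    using w a(2) by (simp add: fixed_box_def latact_fixed_iff realact_bary_fixed_iff [OF g])
  have nf: "\<forall>k. nn (vperm g k) = nn k" using nn by (simp add: invariant_fns_def)
  let ?v = "add_vertex_multiples (w, nn)"
  have ev: "emb ?v = bary (\<lambda>k. a k + real (nn k))"
    by (simp add: emb_add_vertex_multiples a bary_add)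
  have "sum (\<lambda>k. a k + real (nn k)) UNIV = real_of_int (snd w) + real (sum nn UNIV)"
    using BOX_height(1) [OF a] by (simp add: sum.distrib)
  also have "\<dots> = real m" using BOX_height(2) [OF a] lev by linarith
  finally have "?v \<in> latpts m P"
    using ev a(1) by (auto simp: latpts_iff_bary intro!: exI [of _ "\<lambda>k. a k + real (nn k)"])
  moreover have "latact A b g ?v = ?v"
    using ev af nf by (simp add: latact_fixed_iff realact_bary_fixed_iff [OF g])
  ultimately show ?thesis by (simp add: fixed_latpts_def)
qed

lemma fixed_latpts_decomposition:
  assumes g: "g \<in> carrier G" and "v \<in> fixed_latpts m g"
  obtains w nn where "w \<in> fixed_box g" "nn \<in> invariant_fns UNIV (vperm g)"
    "nat (snd w) + sum nn UNIV = m" "v = add_vertex_multiples (w, nn)"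
proof -
  note v = \<open>v \<in> fixed_latpts m g\<close>
  then obtain c where c: "\<forall>k. 0 \<le> c k" "sum c UNIV = real m" "emb v = bary c"
    by (auto simp: fixed_latpts_def latpts_iff_bary)
  have cf: "\<forall>k. c (vperm g k) = c k"
    using v c(3) by (simp add: fixed_latpts_def latact_fixed_iff realact_bary_fixed_iff[OF g])
  define nn where "nn = (\<lambda>k. nat (floor (c k)))"
  define a where "a = (\<lambda>k. c k - real (nn k))"
  have nnr: "real (nn k) = of_int (floor (c k))" for k
    using c(1) by (simp add: nn_def)
  have a01: "\<forall>k. 0 \<le> a k \<and> a k < 1"
  proof
    fix k
    have h1: "real_of_int (floor (c k)) \<le> c k" by (rule of_int_floor_le)
    have h2: "c k < real_of_int (floor (c k)) + 1" by (rule real_of_int_floor_add_one_gt)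
    show "0 \<le> a k \<and> a k < 1"
      unfolding a_def using nnr[of k] h1 h2 by linarith
  qed
  define w where "w = v - (\<Sum>k\<in>UNIV. int_scale (int (nn k)) (vs (vertex_index k)))"
  have ew: "emb w = bary a"
    by (simp add: w_def emb_diff emb_vertex_sum c(3) a_def bary_diff)
  have vP: "v = add_vertex_multiples (w, nn)" by (simp add: add_vertex_multiples_def w_def)
  have wB: "w \<in> BOX CARD('d) vs" using a01 ew by (auto simp: BOX_iff_bary)
  have nf: "\<forall>k. nn (vperm g k) = nn k" using cf by (simp add: nn_def)
  have af: "\<forall>k. a (vperm g k) = a k" using cf nf by (simp add: a_def)
  have wf: "latact A b g w = w" using ew af by (simp add: latact_fixed_iff realact_bary_fixed_iff[OF g])
  have "real_of_int (snd w) = sum a UNIV" by (rule BOX_height(1)[OF a01 ew])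
  also have "\<dots> = real m - real (sum nn UNIV)" by (simp add: a_def sum_subtractf c(2))
  finally have sw: "real_of_int (snd w) = real_of_int (int m - int (sum nn UNIV))" by simp
  then have sw2: "snd w = int m - int (sum nn UNIV)" by (simp only: of_int_eq_iff)
  have "snd w \<ge> 0" by (rule BOX_height(2)[OF a01 ew])
  then have lev: "nat (snd w) + sum nn UNIV = m" using sw2 by linarith
  show thesis
    using that [of w nn] wB wf nf lev vP by (simp add: fixed_box_def invariant_fns_def)
qed

lemma bij_betw_fixed_latpts:
  fixes m :: nat
  assumes g: "g \<in> carrier G"
  defines "S \<equiv> {x \<in> fixed_box g \<times> invariant_fns UNIV (vperm g).
                  (\<lambda>(w, nn). nat (snd w) + sum nn UNIV) x = m}"
  shows "bij_betw add_vertex_multiples S (fixed_latpts m g)"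
proof (rule bij_betw_imageI)
  show "inj_on add_vertex_multiples S"
    by (rule inj_on_subset [OF inj_on_add_vertex_multiples]) (auto simp: S_def fixed_box_def)
  show "add_vertex_multiples ` S = fixed_latpts m g"
  proof
    show "add_vertex_multiples ` S \<subseteq> fixed_latpts m g"
      using add_vertex_multiples_in_fixed_latpts [OF g] by (auto simp: S_def)
    show "fixed_latpts m g \<subseteq> add_vertex_multiples ` S"
    proof
      fix v assume "v \<in> fixed_latpts m g"
      then obtain w nn where "w \<in> fixed_box g" "nn \<in> invariant_fns UNIV (vperm g)"
        "nat (snd w) + sum nn UNIV = m" "v = add_vertex_multiples (w, nn)"
        by (rule fixed_latpts_decomposition [OF g])
      then show "v \<in> add_vertex_multiples ` S" unfolding S_def by force
    qed
  qed
qed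

end

section \<open>The action in the vertex basis\<close>

definition fps_of_real :: "real \<Rightarrow> complex fps" where "fps_of_real r = fps_const (complex_of_real r)"

lemma fps_of_real_add: "fps_of_real (x + y) = fps_of_real x + fps_of_real y" by (simp add: fps_of_real_def)
lemma fps_of_real_mult: "fps_of_real (x * y) = fps_of_real x * fps_of_real y" by (simp add: fps_of_real_def)
lemma fps_of_real_0: "fps_of_real 0 = 0" by (simp add: fps_of_real_def)
lemma fps_of_real_1: "fps_of_real 1 = 1" by (simp add: fps_of_real_def)
lemma fps_of_real_sum: "finite S \<Longrightarrow> fps_of_real (sum f S) = (\<Sum>x\<in>S. fps_of_real (f x))"
  by (induction S rule: finite_induct) (simp_all add: fps_of_real_0 fps_of_real_add)

definition fps_mat :: "real^'n^'m \<Rightarrow> complex fps^'n^'m" where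
  "fps_mat M = (\<chi> i j. fps_of_real (M $ i $ j))"

lemma fps_mat_mult: "fps_mat (M ** N) = fps_mat M ** fps_mat N"
  by (simp add: fps_mat_def matrix_matrix_mult_def vec_eq_iff fps_of_real_sum fps_of_real_mult)

lemma fps_mat_one: "fps_mat (mat 1) = mat 1"
  by (simp add: fps_mat_def mat_def vec_eq_iff fps_of_real_0 fps_of_real_1)

lemma id_minus_mult_matrix_nth:
  fixes M B :: "'a::comm_ring_1^'n^'n"
  shows "((\<chi> i j. (if i = j then 1 else 0) - x * M $ i $ j) ** B) $ i $ k = B $ i $ k - x * (M ** B) $ i $ k"
proof -
  have "((\<chi> i j. (if i = j then 1 else 0) - x * M $ i $ j) ** B) $ i $ k
      = (\<Sum>j\<in>UNIV. (if i = j then 1 else 0) * B $ j $ k) - x * (\<Sum>j\<in>UNIV. M $ i $ j * B $ j $ k)"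
    by (simp add: matrix_matrix_mult_def left_diff_distrib sum_subtractf sum_distrib_left algebra_simps)
  also have "(\<Sum>j\<in>UNIV. (if i = j then 1 else 0) * B $ j $ k) = B $ i $ k"
  proof -
    have e: "(\<lambda>j. (if i = j then 1 else 0) * B $ j $ k) = (\<lambda>j. if i = j then B $ j $ k else 0)" by auto
    show ?thesis unfolding e by simp
  qed
  finally show ?thesis by (simp add: matrix_matrix_mult_def)
qed

lemma matrix_mult_id_minus_nth:
  fixes M B :: "'a::comm_ring_1^'n^'n"
  shows "(B ** (\<chi> i j. (if i = j then 1 else 0) - x * M $ i $ j)) $ i $ k = B $ i $ k - x * (B ** M) $ i $ k"
proof -
  have "(B ** (\<chi> i j. (if i = j then 1 else 0) - x * M $ i $ j)) $ i $ k
      = (\<Sum>j\<in>UNIV. B $ i $ j * (if j = k then 1 else 0)) - x * (\<Sum>j\<in>UNIV. B $ i $ j * M $ j $ k)"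
    by (simp add: matrix_matrix_mult_def right_diff_distrib sum_subtractf sum_distrib_left algebra_simps)
  also have "(\<Sum>j\<in>UNIV. B $ i $ j * (if j = k then 1 else 0)) = B $ i $ k"
    by (simp add: if_distrib cong: if_cong)
  finally show ?thesis by (simp add: matrix_matrix_mult_def)
qed

lemma sum_UNIV_option: "(\<Sum>k\<in>(UNIV::'a::finite option set). f k) = f None + (\<Sum>i\<in>UNIV. f (Some i))"
proof -
  have "(\<Sum>k\<in>(UNIV::'a option set). f k) = (\<Sum>k\<in>insert None (range Some). f k)"
    by (simp add: UNIV_option_conv[symmetric])
  also have "\<dots> = f None + sum f (range Some)" by (rule sum.insert) auto
  also have "sum f (range Some) = (\<Sum>i\<in>UNIV. f (Some i))" by (simp add: sum.reindex)
  finally show ?thesis .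
qed

context lattice_simplex_action begin

definition coords :: "(real^'d) \<times> real \<Rightarrow> real^('d option)" where
  "coords y = (\<chi> k. case k of None \<Rightarrow> snd y | Some i \<Rightarrow> fst y $ i)"

lemma linear_coords: "linear coords"
  by (rule linearI) (simp_all add: coords_def vec_eq_iff split: option.splits)

lemma coords_eq_0D: "coords y = 0 \<Longrightarrow> y = 0"
proof -
  assume h: "coords y = 0"
  have "snd y = 0" using h[THEN arg_cong[where f = "\<lambda>v. v $ None"]] by (simp add: coords_def)
  moreover have "fst y = 0"
  proof (rule vec_eq_iff[THEN iffD2], rule allI)
    fix i show "fst y $ i = 0 $ i" using h[THEN arg_cong[where f = "\<lambda>v. v $ Some i"]] by (simp add: coords_def)
  qed
  ultimately show "y = 0" by (simp add: prod_eq_iff)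
qed

definition affine_matrix :: "'g \<Rightarrow> real^('d option)^('d option)" where
  "affine_matrix g = (\<chi> i j. case i of None \<Rightarrow> (if j = None then 1 else 0)
      | Some i' \<Rightarrow> (case j of None \<Rightarrow> real_of_int (b g $ i') | Some j' \<Rightarrow> real_of_int (A g $ i' $ j')))"

lemma affine_matrix_coords: "affine_matrix g *v coords y = coords (realact A b g y)"
proof (rule vec_eq_iff[THEN iffD2], rule allI)
  fix k
  show "(affine_matrix g *v coords y) $ k = coords (realact A b g y) $ k"
  proof (cases k)
    case None
    then show ?thesis
      by (simp add: matrix_vector_mult_def sum_UNIV_option affine_matrix_def coords_def realact_def)
  next
    case (Some i)
    then show ?thesis
      by (simp add: matrix_vector_mult_def sum_UNIV_option affine_matrix_def coords_def realact_def algebra_simps)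
  qed
qed

definition vertex_matrix :: "real^('d option)^('d option)" where
  "vertex_matrix = (\<chi> i k. coords (vertex k) $ i)"

definition perm_matrix :: "'g \<Rightarrow> real^('d option)^('d option)" where
  "perm_matrix g = (\<chi> j k. if j = vperm g k then 1 else 0)"

lemma affine_matrix_vertex_matrix:
  assumes g: "g \<in> carrier G" shows "affine_matrix g ** vertex_matrix = vertex_matrix ** perm_matrix g"
proof (rule vec_eq_iff[THEN iffD2], rule allI, rule vec_eq_iff[THEN iffD2], rule allI)
  fix i k
  have "(affine_matrix g ** vertex_matrix) $ i $ k = (affine_matrix g *v coords (vertex k)) $ i"
    by (simp add: matrix_matrix_mult_def matrix_vector_mult_def vertex_matrix_def)
  also have "\<dots> = coords (vertex (vperm g k)) $ i" by (simp add: affine_matrix_coords vertex_vperm[OF g])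
  also have "\<dots> = (vertex_matrix ** perm_matrix g) $ i $ k"
    by (simp add: matrix_matrix_mult_def vertex_matrix_def perm_matrix_def if_distrib cong: if_cong)
  finally show "(affine_matrix g ** vertex_matrix) $ i $ k = (vertex_matrix ** perm_matrix g) $ i $ k" .
qed

lemma vertex_matrix_left_invertible: "\<exists>T. T ** vertex_matrix = mat 1"
proof -
  have "x = 0" if "vertex_matrix *v x = 0" for x
  proof -
    have "vertex_matrix *v x = coords (bary (\<lambda>k. x $ k))"
    proof -
      have "coords (bary (\<lambda>k. x $ k)) = (\<Sum>k\<in>UNIV. x $ k *\<^sub>R coords (vertex k))"
        unfolding bary_def using linear_coords by (simp add: linear_sum linear_scale)
      then show ?thesis
        by (simp add: vec_eq_iff matrix_vector_mult_def vertex_matrix_def mult.commute)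
    qed
    then have "bary (\<lambda>k. x $ k) = 0" using that coords_eq_0D by simp
    then show "x = 0" using bary_eq_0D by (simp add: vec_eq_iff)
  qed
  then show ?thesis using matrix_left_invertible_ker by blast
qed

definition pencil_affine :: "'g \<Rightarrow> complex fps^('d option)^('d option)" where
  "pencil_affine g = (\<chi> i j. (if i = j then 1 else 0) - fps_X * fps_mat (affine_matrix g) $ i $ j)"

definition pencil_perm :: "'g \<Rightarrow> complex fps^('d option)^('d option)" where
  "pencil_perm g = (\<chi> i j. (if i = j then 1 else 0) - fps_X * fps_mat (perm_matrix g) $ i $ j)"

lemma det_pencil_affine_eq_perm:
  assumes g: "g \<in> carrier G" shows "det (pencil_affine g) = det (pencil_perm g)"
proof -
  have e: "pencil_affine g ** fps_mat vertex_matrix = fps_mat vertex_matrix ** pencil_perm g"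
  proof (rule vec_eq_iff[THEN iffD2], rule allI, rule vec_eq_iff[THEN iffD2], rule allI)
    fix i k
    show "(pencil_affine g ** fps_mat vertex_matrix) $ i $ k = (fps_mat vertex_matrix ** pencil_perm g) $ i $ k"
      unfolding pencil_affine_def pencil_perm_def id_minus_mult_matrix_nth matrix_mult_id_minus_nth
      by (simp add: fps_mat_mult[symmetric] affine_matrix_vertex_matrix[OF g])
  qed
  obtain T where T: "T ** vertex_matrix = mat 1" using vertex_matrix_left_invertible by blast
  have "det (fps_mat T) * det (fps_mat vertex_matrix) = 1"
    using T by (simp add: det_mul[symmetric] fps_mat_mult[symmetric] fps_mat_one)
  then have nz: "det (fps_mat vertex_matrix) \<noteq> 0" by auto
  have "det (pencil_affine g) * det (fps_mat vertex_matrix) = det (fps_mat vertex_matrix) * det (pencil_perm g)"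
    using e by (simp add: det_mul[symmetric])
  then show ?thesis using nz by (simp add: mult.commute)
qed

lemma det_pencil_perm:
  assumes g: "g \<in> carrier G" shows "det (pencil_perm g) = det_on UNIV (id_minus_X_perm (vperm g))"
proof -
  have "pencil_perm g = transpose (\<chi> i j. id_minus_X_perm (vperm g) i j)"
    by (simp add: pencil_perm_def transpose_def fps_mat_def perm_matrix_def id_minus_X_perm_def vec_eq_iff fps_of_real_0 fps_of_real_1)
  then have "det (pencil_perm g) = det (\<chi> i j. id_minus_X_perm (vperm g) i j)" by (simp only: det_transpose)
  also have "\<dots> = det_on UNIV (id_minus_X_perm (vperm g))" by (simp add: det_eq_det_on)
  finally show ?thesis .
qed

lemma det_pencil_affine: "det (pencil_affine g) = (1 - fps_X) * detIrho A g"
proof -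
  let ?N = "\<lambda>i j. pencil_affine g $ i $ j"
  have "det (pencil_affine g) = det_on UNIV ?N" by (rule det_eq_det_on)
  also have "\<dots> = det_on {None} ?N * det_on (UNIV - {None}) ?N"
    by (rule det_on_block_triangular) (auto simp: pencil_affine_def fps_mat_def affine_matrix_def fps_of_real_0)
  also have "det_on {None} ?N = 1 - fps_X"
    by (simp add: det_on_singleton pencil_affine_def fps_mat_def affine_matrix_def fps_of_real_1)
  also have "UNIV - {None} = range Some" by (auto simp: UNIV_option_conv)
  also have "det_on (range Some) ?N = det_on UNIV (\<lambda>i j. ?N (Some i) (Some j))"
    by (rule det_on_reindex) auto
  also have "\<dots> = detIrho A g"
    by (simp add: detIrho_def det_eq_det_on pencil_affine_def fps_mat_def affine_matrix_def fps_of_real_def mult.commute)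
  finally show ?thesis .
qed

lemma det_affine_pencil_eq_det_on:
  assumes g: "g \<in> carrier G" shows "(1 - fps_X) * detIrho A g = det_on UNIV (id_minus_X_perm (vperm g))"
  using det_pencil_affine det_pencil_affine_eq_perm[OF g] det_pencil_perm[OF g] by simp

end


section \<open>The box decomposition of the equivariant Ehrhart series\<close>

context lattice_simplex_action begin

lemma count_fps_fixed_latpts:
  assumes g: "g \<in> carrier G"
  shows "Abs_fps (\<lambda>m. permchar A b P m g)
    = count_fps (fixed_box g) (\<lambda>w. nat (snd w)) * count_fps (invariant_fns UNIV (vperm g)) (fn_weight UNIV)"
proof -
  let ?wt = "\<lambda>(w, nn). nat (snd w) + fn_weight UNIV nn"
  have "Abs_fps (\<lambda>m. permchar A b P m g)
      = count_fps (fixed_box g \<times> invariant_fns UNIV (vperm g)) ?wt"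
    unfolding count_fps_def fn_weight_def permchar_def
    using bij_betw_same_card [OF bij_betw_fixed_latpts [OF g]] by (simp add: fixed_latpts_def)
  also have "\<dots> = count_fps (fixed_box g) (\<lambda>w. nat (snd w))
      * count_fps (invariant_fns UNIV (vperm g)) (fn_weight UNIV)"
  proof (rule count_fps_Times)
    show "finite {w \<in> fixed_box g. nat (snd w) = k}" for k
      by (rule finite_subset [OF _ BOX_finite]) (auto simp: fixed_box_def)
    show "finite {nn \<in> invariant_fns UNIV (vperm g). fn_weight UNIV nn = k}" for k
      by (rule finite_invariant_fns_weight) simp
  qed
  finally show ?thesis .
qed

lemma count_fps_invariant_fns_mult_det:
  assumes g: "g \<in> carrier G"
  shows "count_fps (invariant_fns UNIV (vperm g)) (fn_weight UNIV) * ((1 - fps_X) * detIrho A g) = 1"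
  using det_id_minus_X_perm_mult_count_fps [OF vperm_permutes [OF g]] det_affine_pencil_eq_det_on [OF g]
  by (simp add: mult.commute)

lemma phi_eq_count_fps_fixed_box:
  assumes g: "g \<in> carrier G"
  shows "phi A b P g = count_fps (fixed_box g) (\<lambda>w. nat (snd w))"
proof -
  have "phi A b P g = Abs_fps (\<lambda>m. permchar A b P m g) * ((1 - fps_X) * detIrho A g)"
    by (simp add: phi_def mult.assoc)
  also have "\<dots> = count_fps (fixed_box g) (\<lambda>w. nat (snd w)) * (count_fps (invariant_fns UNIV (vperm g)) (fn_weight UNIV) * ((1 - fps_X) * detIrho A g))"
    by (simp add: count_fps_fixed_latpts[OF g] mult.assoc)
  also have "\<dots> = count_fps (fixed_box g) (\<lambda>w. nat (snd w))" by (simp add: count_fps_invariant_fns_mult_det[OF g])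
  finally show ?thesis .
qed

lemma BOX_snd_nonneg: "w \<in> BOX CARD('d) vs \<Longrightarrow> snd w \<ge> 0"
proof -
  assume "w \<in> BOX CARD('d) vs"
  then obtain a where a: "\<forall>k. 0 \<le> a k \<and> a k < 1" "emb w = bary a" by (auto simp: BOX_iff_bary)
  show "snd w \<ge> 0" by (rule BOX_height(2)[OF a])
qed

lemma phi_nth:
  assumes g: "g \<in> carrier G"
  shows "fps_nth (phi A b P g) i = of_nat (card {w \<in> BOX CARD('d) vs. snd w = int i \<and> latact A b g w = w})"
proof -
  have "{w \<in> fixed_box g. nat (snd w) = i} = {w \<in> BOX CARD('d) vs. snd w = int i \<and> latact A b g w = w}"
    using BOX_snd_nonneg by (auto simp: fixed_box_def)
  then show ?thesis by (simp add: phi_eq_count_fps_fixed_box[OF g] count_fps_nth)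
qed

lemma fixed_point_in_P:
  assumes g: "g \<in> carrier G"
  shows "\<exists>x\<in>P. realact A b g x = x"
proof -
  define x where "x = bary (\<lambda>k. 1 / real CARD('d option))"
  have "x \<in> P" unfolding P_eq_bary x_def
    by (intro CollectI exI[of _ "\<lambda>k. 1 / real CARD('d option)"]) simp
  moreover have "realact A b g x = x" unfolding x_def by (simp add: realact_bary_fixed_iff[OF g])
  ultimately show ?thesis by blast
qed

lemma latpts_fixpart:
  assumes g: "g \<in> carrier G"
  shows "latpts m (fixpart A b g P) = fixed_latpts m g"
proof
  have lin: "linear (realact A b g)" by (rule realact_linear)
  show "latpts m (fixpart A b g P) \<subseteq> fixed_latpts m g"
  proof
    fix v assume "v \<in> latpts m (fixpart A b g P)"
    then obtain x where x: "x \<in> P" "realact A b g x = x" "emb v = real m *\<^sub>R x"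
      by (auto simp: latpts_def fixpart_def)
    have "emb v \<in> (\<lambda>y. real m *\<^sub>R y) ` P" using x by blast
    moreover have "realact A b g (emb v) = emb v" using x lin by (simp add: linear_scale)
    ultimately show "v \<in> fixed_latpts m g" by (simp add: fixed_latpts_def latpts_def latact_fixed_iff)
  qed
  show "fixed_latpts m g \<subseteq> latpts m (fixpart A b g P)"
  proof
    fix v assume v: "v \<in> fixed_latpts m g"
    then obtain x where x: "x \<in> P" "emb v = real m *\<^sub>R x" by (auto simp: fixed_latpts_def latpts_def)
    have f: "realact A b g (emb v) = emb v" using v by (simp add: fixed_latpts_def latact_fixed_iff)
    show "v \<in> latpts m (fixpart A b g P)"
    proof (cases "m = 0")
      case True
      obtain z where z: "z \<in> P" "realact A b g z = z" using fixed_point_in_P[OF g] by blast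
      have "emb v = real m *\<^sub>R z" using x True by simp
      then show ?thesis using z by (auto simp: latpts_def fixpart_def)
    next
      case False
      have "real m *\<^sub>R realact A b g x = real m *\<^sub>R x" using f x lin by (simp add: linear_scale)
      then have "realact A b g x = x" using False by simp
      then show ?thesis using x by (auto simp: latpts_def fixpart_def)
    qed
  qed
qed

lemma fixed_ehrhart_series:
  assumes g: "g \<in> carrier G"
  shows "Abs_fps (\<lambda>m. of_nat (card (latpts m (fixpart A b g P))) :: complex)
        = (\<Sum>w\<in>{w \<in> BOX CARD('d) vs. latact A b g w = w}. fps_X ^ nat (snd w))
          / ((1 - fps_X) * detIrho A g)"
proof -
  let ?D = "(1 - fps_X) * detIrho A g"
  have D0: "?D \<noteq> 0" using count_fps_invariant_fns_mult_det[OF g] by auto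
  have a: "Abs_fps (\<lambda>m. of_nat (card (latpts m (fixpart A b g P))) :: complex) = Abs_fps (\<lambda>m. permchar A b P m g)"
    by (simp add: latpts_fixpart[OF g] permchar_def fixed_latpts_def)
  have "Abs_fps (\<lambda>m. permchar A b P m g) * ?D = phi A b P g"
    by (simp add: phi_def mult.assoc)
  also have "\<dots> = (\<Sum>w\<in>{w \<in> BOX CARD('d) vs. latact A b g w = w}. fps_X ^ nat (snd w))"
    unfolding phi_eq_count_fps_fixed_box[OF g] fixed_box_def
    by (rule count_fps_eq_sum) (rule finite_subset[OF _ BOX_finite], auto)
  finally have e: "Abs_fps (\<lambda>m. permchar A b P m g) * ?D = (\<Sum>w\<in>{w \<in> BOX CARD('d) vs. latact A b g w = w}. fps_X ^ nat (snd w))" .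
  show ?thesis unfolding a e[symmetric] using D0 by simp
qed

end


section \<open>Multiplicities of characters in \<open>\<phi>\<^sub>i\<close>\<close>

context lattice_simplex_action
begin

lemma A_mult: "g \<in> carrier G \<Longrightarrow> h \<in> carrier G \<Longrightarrow> A g ** A h = A (g \<otimes>\<^bsub>G\<^esub> h)"
  by (rule latact_comp_coeffs(1) [of A b g h "g \<otimes>\<^bsub>G\<^esub> h"]) (simp add: act_mult)

lemma A_one: "A \<one>\<^bsub>G\<^esub> = mat 1"
proof -
  have "A \<one>\<^bsub>G\<^esub> *v x = x" for x using act_one [of "(x, 0)"] by (simp add: latact_def)
  then show ?thesis by (simp add: matrix_eq)
qed

definition box_level :: "nat \<Rightarrow> ((int^'d) \<times> int) set" where
  "box_level i = {w \<in> BOX CARD('d) vs. snd w = int i}"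

lemma finite_box_level: "finite (box_level i)"
  by (rule finite_subset [OF _ BOX_finite]) (auto simp: box_level_def)

lemma latact_box_level:
  assumes g: "g \<in> carrier G" and w: "w \<in> box_level i"
  shows "latact A b g w \<in> box_level i"
proof -
  obtain a where a: "\<forall>k. 0 \<le> a k \<and> a k < 1" "emb w = bary a"
    using w by (auto simp: box_level_def BOX_iff_bary)
  have "emb (latact A b g w) = bary (\<lambda>k. a (Hilbert_Choice.inv (vperm g) k))"
    using a(2) by (simp add: realact_emb [symmetric] realact_bary [OF g])
  then have "latact A b g w \<in> BOX CARD('d) vs" using a(1) by (auto simp: BOX_iff_bary)
  moreover have "snd (latact A b g w) = snd w" by (simp add: latact_def)
  ultimately show ?thesis using w by (simp add: box_level_def)
qed

lemma char_inner_phi: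
  fixes \<theta> :: "'g \<Rightarrow> complex"
  assumes theta_mult: "\<And>g h. g \<in> carrier G \<Longrightarrow> h \<in> carrier G \<Longrightarrow> \<theta> (g \<otimes>\<^bsub>G\<^esub> h) = \<theta> g * \<theta> h"
    and theta_one: "\<theta> \<one>\<^bsub>G\<^esub> = 1"
  shows "char_inner G (\<lambda>g. fps_nth (phi A b P g) i) \<theta>
    = of_nat (card {Orb \<in> act_orbits G (latact A b) (box_level i).
                      \<forall>w\<in>Orb. \<forall>g\<in>act_stabilizer G (latact A b) w. \<theta> g = 1})"
proof -
  have "char_inner G (\<lambda>g. fps_nth (phi A b P g) i) \<theta>
      = char_inner G (\<lambda>g. of_nat (card {w \<in> box_level i. latact A b g w = w})) \<theta>"
    unfolding char_inner_def
    by (intro arg_cong2 [where f = "(/)"] sum.cong refl) (simp add: phi_nth box_level_def conj_assoc)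
  also have "\<dots> = of_nat (card {Orb \<in> act_orbits G (latact A b) (box_level i).
                      \<forall>w\<in>Orb. \<forall>g\<in>act_stabilizer G (latact A b) w. \<theta> g = 1})"
    by (rule char_inner_permutation_character [OF grp fin finite_box_level act_one act_mult
          latact_box_level theta_mult theta_one])
  finally show ?thesis .
qed

end

theorem proposition6p1:
  fixes G :: "('g, 'c) monoid_scheme"
    and A :: "'g \<Rightarrow> int^'d^'d" and b :: "'g \<Rightarrow> int^'d"
    and vs :: "nat \<Rightarrow> (int^'d) \<times> int"
    and P :: "((real^'d) \<times> real) set"
  assumes grp: "group G" and fin: "finite (carrier G)"
    and act_one: "\<And>v. latact A b \<one>\<^bsub>G\<^esub> v = v"
    and act_mult: "\<And>g h v. g \<in> carrier G \<Longrightarrow> h \<in> carrier G \<Longrightarrow>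
                     latact A b (g \<otimes>\<^bsub>G\<^esub> h) v = latact A b g (latact A b h v)"
    and vs_height: "\<And>i. i \<le> CARD('d) \<Longrightarrow> snd (vs i) = 1"
    and vs_inj: "inj_on vs {0..CARD('d)}"
    and vs_indep: "\<not> affine_dependent (emb ` vs ` {0..CARD('d)})"
    and P_def: "P = convex hull (emb ` vs ` {0..CARD('d)})"
    and P_inv: "\<And>g. g \<in> carrier G \<Longrightarrow> realact A b g ` P = P"
  shows
    "(\<forall>i. \<forall>g\<in>carrier G. fps_nth (phi A b P g) i
          = of_nat (card {w \<in> BOX CARD('d) vs. snd w = int i \<and> latact A b g w = w}))
   \<and> (\<forall>g\<in>carrier G.
        Abs_fps (\<lambda>m. of_nat (card (latpts m (fixpart A b g P))) :: complex)
        = (\<Sum>w\<in>{w \<in> BOX CARD('d) vs. latact A b g w = w}. fps_X ^ nat (snd w))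
          / ((1 - fps_X) * detIrho A g))
   \<and> (\<forall>i. char_inner G (\<lambda>g. fps_nth (phi A b P g) i) (\<lambda>g. 1)
          = of_nat (card (act_orbits G (latact A b) {w \<in> BOX CARD('d) vs. snd w = int i})))
   \<and> (\<forall>i. char_inner G (\<lambda>g. fps_nth (phi A b P g) i) (\<lambda>g. of_int (det (A g)))
          = of_nat (card {Orb \<in> act_orbits G (latact A b) {w \<in> BOX CARD('d) vs. snd w = int i}.
                            \<forall>w\<in>Orb. act_stabilizer G (latact A b) w \<subseteq> {g \<in> carrier G. det (A g) = 1}}))"
proof -
  interpret lattice_simplex_action G A b vs P
    by (rule lattice_simplex_action.intro) (fact grp fin act_one act_mult vs_height vs_inj vs_indep P_def P_inv)+
  have trivial: "char_inner G (\<lambda>g. fps_nth (phi A b P g) i) (\<lambda>g. 1)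
      = of_nat (card (act_orbits G (latact A b) (box_level i)))" for i
    using char_inner_phi [of "\<lambda>g. 1" i] by simp
  have "of_int (det (A (g \<otimes>\<^bsub>G\<^esub> h))) = (of_int (det (A g)) * of_int (det (A h)) :: complex)"
    if "g \<in> carrier G" "h \<in> carrier G" for g h
    using that by (simp add: A_mult [symmetric] det_mul)
  then have determinant: "char_inner G (\<lambda>g. fps_nth (phi A b P g) i) (\<lambda>g. of_int (det (A g)))
      = of_nat (card {Orb \<in> act_orbits G (latact A b) (box_level i).
          \<forall>w\<in>Orb. act_stabilizer G (latact A b) w \<subseteq> {g \<in> carrier G. det (A g) = 1}})" for i
    using char_inner_phi [of "\<lambda>g. of_int (det (A g))" i]
    by (simp add: A_one act_stabilizer_def subset_iff)
  show ?thesis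
    using phi_nth fixed_ehrhart_series trivial determinant by (simp add: box_level_def)
qed

end
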